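(* Let $f\in L^2(I)$ and let $g_0$ be the solution to $BEP_{2,\infty}$. Let $h$ be a real-valued Dini-continuous function on $\mathbb T$ whose support is contained in the interior $\mathring I$ of $I$, and let $$b(z)=\frac1{2\pi}\int_I\frac{e^{it}+z}{e^{it}-z}\,h(e^{it})\,dt,\qquad z\in\mathbb D.$$ Then $b$ extends continuously to $\overline{\mathbb D}$, and $$\mathrm{Re}\,\langle (f-g_0)\overline{g_0},\,b\rangle_I=0.$$
   Context: $\mathbb T$ unit circle, $\mathbb D$ unit disk, $\ell$ normalized Lebesgue measure. $I\subset\mathbb T$ measurable, $J=\mathbb T\setminus I$, $\ell(I)>0,\ell(J)>0$; $\mathring I$ is the interior of $I$ in $\mathbb T$. $\langle u,v\rangle_E=\frac1{2\pi}\int_E u\bar v\,d\theta$ and $\|h\|_{L^2(E)}=\langle h,h\rangle_E^{1/2}$. A function $h$ on $\mathbb T$ is Dini-continuous if $\omega_h(t)/t\in L^1([0,\pi])$, where $\omega_h(t)=\sup_{|\theta_1-\theta_2|\le t}|h(e^{i\theta_1})-h(e^{i\theta_2})|$. $H^2$ is the Hardy space. Problem $BEP_{2,\infty}$: given $f\in L^2(I)$, find $g_0\in H^2$ with $|g_0|\le1$ a.e. on $J$ minimizing $\|f-g\|_{L^2(I)}$ over all $g\in H^2$ with $|g|\le1$ a.e. on $J$; it has a unique solution. *)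

theory Defs
  imports "HOL-Analysis.Analysis"
begin

text \<open>The unit circle T is the complex sphere of radius 1; a function on T is a
function on complex numbers, evaluated at cis t.  A subset E of T is
parametrised by the angles in [0, 2 pi) hitting it.\<close>

definition circT :: "complex set" where
  "circT = sphere 0 1"

definition angles :: "complex set \<Rightarrow> real set" where
  "angles E = {t \<in> {0..<2*pi}. cis t \<in> E}"

definition ell :: "complex set \<Rightarrow> real" where
  "ell E = measure lebesgue (angles E) / (2*pi)"

definition meas_T :: "complex set \<Rightarrow> bool" where
  "meas_T E \<longleftrightarrow> E \<subseteq> circT \<and> angles E \<in> sets lebesgue"

definition L2_on :: "complex set \<Rightarrow> (complex \<Rightarrow> complex) \<Rightarrow> bool" where
  "L2_on E u \<longleftrightarrow>
     (\<lambda>t. indicator (angles E) t *\<^sub>R u (cis t)) \<in> borel_measurable lebesgue \<and>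
     set_integrable lebesgue (angles E) (\<lambda>t. (cmod (u (cis t)))\<^sup>2)"

definition inner_on :: "complex set \<Rightarrow> (complex \<Rightarrow> complex) \<Rightarrow> (complex \<Rightarrow> complex) \<Rightarrow> complex" where
  "inner_on E u v = complex_of_real (1/(2*pi)) *
     (LINT t:angles E|lebesgue. u (cis t) * cnj (v (cis t)))"

definition norm_on :: "complex set \<Rightarrow> (complex \<Rightarrow> complex) \<Rightarrow> real" where
  "norm_on E u = sqrt (Re (inner_on E u u))"

text \<open>Hardy space H^2, as boundary functions: L^2 functions on T whose Fourier
coefficients of negative index vanish.\<close>
definition H2 :: "(complex \<Rightarrow> complex) \<Rightarrow> bool" where
  "H2 g \<longleftrightarrow> L2_on circT g \<and>
     (\<forall>n::nat. n \<ge> 1 \<longrightarrow> (LINT t:{0..<2*pi}|lebesgue. g (cis t) * cis (real n * t)) = 0)"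

definition BEP_admissible :: "complex set \<Rightarrow> (complex \<Rightarrow> complex) \<Rightarrow> bool" where
  "BEP_admissible J g \<longleftrightarrow> H2 g \<and>
     (AE t in lebesgue. t \<in> angles J \<longrightarrow> cmod (g (cis t)) \<le> 1)"

definition BEP_solution :: "complex set \<Rightarrow> (complex \<Rightarrow> complex) \<Rightarrow> (complex \<Rightarrow> complex) \<Rightarrow> bool" where
  "BEP_solution I f g0 \<longleftrightarrow> BEP_admissible (circT - I) g0 \<and>
     (\<forall>g. BEP_admissible (circT - I) g \<longrightarrow>
        norm_on I (\<lambda>z. f z - g0 z) \<le> norm_on I (\<lambda>z. f z - g z))"

definition modcont :: "(complex \<Rightarrow> real) \<Rightarrow> real \<Rightarrow> ennreal" where
  "modcont h t = (SUP p \<in> {(a, b). \<bar>a - b\<bar> \<le> t}.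
       ennreal \<bar>h (cis (fst p)) - h (cis (snd p))\<bar>)"

definition dini_continuous :: "(complex \<Rightarrow> real) \<Rightarrow> bool" where
  "dini_continuous h \<longleftrightarrow>
     (\<integral>\<^sup>+ t. indicator {0<..pi} t * (modcont h t / ennreal t) \<partial>lborel) < \<infinity>"

definition herglotz :: "complex set \<Rightarrow> (complex \<Rightarrow> real) \<Rightarrow> complex \<Rightarrow> complex" where
  "herglotz I h z = complex_of_real (1/(2*pi)) *
     (LINT t:angles I|lebesgue. (cis t + z) / (cis t - z) * complex_of_real (h (cis t)))"

end

theory Submission
  imports Defs
begin

text \<open>
  Write \<open>b\<close> for the Herglotz integral of \<open>h\<close> over \<open>I\<close>.  Since \<open>h\<close> vanishes off
  \<open>I\<close>, \<open>b\<close> is the normalised Herglotz transform of \<open>h\<close> over the whole circle; expanding the kernel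
  in a geometric series shows that \<open>b\<close> is continuous in the open disc.  Dini continuity of \<open>h\<close>
  makes \<open>\<omega>(x)/|x|\<close> integrable, so the kernel estimate \<open>|K_r(x) - K_1(x)| \<le> 20/|x|\<close> and dominated
  convergence show that \<open>b(r w)\<close> converges, uniformly in \<open>|w| = 1\<close>, to the boundary function
  \<open>b_1(w) = h(w) + (1/2pi) \<integral> K_1(x) (h(w e^{-ix}) - h(w)) dx\<close>, whose real part is \<open>h\<close>.  Extending
  \<open>b\<close> by \<open>b_1\<close> gives a continuous function on the closed disc.

  For the orthogonality relation: \<open>t \<mapsto> b_1(e^{it})\<close> is a uniform limit of analytic polynomials,
  hence so is \<open>1/(1 - s b_1)\<close> for small real \<open>s\<close>.  Multiplying \<open>g_0\<close> by it stays in \<open>H\<^sup>2\<close>, and off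
  \<open>I\<close> the modulus does not increase because \<open>Re b_1 = h = 0\<close> there.  So \<open>g_0/(1 - s b_1)\<close> is
  admissible, and minimality of \<open>g_0\<close> yields \<open>2 s a \<le> s\<^sup>2 P\<close> for all small \<open>s\<close>, where
  \<open>a = Re \<langle>(f - g_0) conj(g_0), b_1\<rangle>_I\<close>; hence \<open>a = 0\<close>.
\<close>

section \<open>Dini-continuous functions on the circle\<close>

lemma modcont_ge: "\<bar>a - b\<bar> \<le> t \<Longrightarrow> ennreal \<bar>h (cis a) - h (cis b)\<bar> \<le> modcont h t"
  unfolding modcont_def by (rule SUP_upper2[of "(a,b)"]) auto

lemma modcont_le:
  "(\<And>a b. \<bar>a - b\<bar> \<le> t \<Longrightarrow> \<bar>h (cis a) - h (cis b)\<bar> \<le> c) \<Longrightarrow> modcont h t \<le> ennreal c"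
  unfolding modcont_def by (rule SUP_least) (auto intro: ennreal_leI)

lemma modcont_mono: "mono (modcont h)"
  unfolding modcont_def mono_def by (intro allI impI SUP_subset_mono) auto

text \<open>The integral of \<open>1/t\<close> over \<open>(0, pi]\<close> diverges; this is what forces a Dini-continuous
  function to have a modulus of continuity tending to zero.\<close>

lemma nn_integral_inverse_diverges:
  "(\<integral>\<^sup>+ t. indicator {0<..pi} t * ennreal (1/t) \<partial>lborel) = \<infinity>"
proof -
  have lower: "ennreal (ln pi - ln d) \<le> (\<integral>\<^sup>+ t. indicator {0<..pi} t * ennreal (1/t) \<partial>lborel)"
    if d: "0 < d" "d \<le> pi" for d
  proof -
    have "((\<lambda>t. 1/t) has_integral (ln pi - ln d)) {d..pi}"
      using d by (intro fundamental_theorem_of_calculus)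
        (auto intro!: derivative_eq_intros simp: has_real_derivative_iff_has_vector_derivative[symmetric])
    then have "ennreal (ln pi - ln d) = (\<integral>\<^sup>+ t. indicator {d..pi} t * (1/t) \<partial>lborel)"
      using nn_integral_has_integral_lebesgue[of "{d..pi}" "\<lambda>t. 1/t"] d by auto
    also have "\<dots> \<le> (\<integral>\<^sup>+ t. indicator {0<..pi} t * ennreal (1/t) \<partial>lborel)"
      using d by (intro nn_integral_mono) (auto split: split_indicator)
    finally show ?thesis .
  qed
  show ?thesis
  proof (rule ccontr)
    assume "\<not> ?thesis"
    then obtain R where R: "(\<integral>\<^sup>+ t. indicator {0<..pi} t * ennreal (1/t) \<partial>lborel) = ennreal R" "0 \<le> R"
      using less_top ennreal_cases by (metis infinity_ennreal_def)
    define d where "d = pi * exp (-(R+1))"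
    have d: "0 < d" "d \<le> pi" unfolding d_def using pi_gt3 R(2) by (auto simp: mult_le_cancel_left1)
    have "ln pi - ln d = R + 1" unfolding d_def using pi_gt3 by (simp add: ln_mult)
    with lower[OF d] R have "ennreal (R+1) \<le> ennreal R" by simp
    with R(2) show False by (simp add: ennreal_le_iff)
  qed
qed

lemma dini_uniformly_continuous:
  assumes "dini_continuous h" "e > 0"
  shows "\<exists>d>0. \<forall>a b. \<bar>a - b\<bar> \<le> d \<longrightarrow> \<bar>h (cis a) - h (cis b)\<bar> < e"
proof (rule ccontr)
  assume no_delta: "\<not> ?thesis"
  have ge: "ennreal e \<le> modcont h t" if t: "t > 0" for t
  proof -
    obtain a b where "\<bar>a - b\<bar> \<le> t" "e \<le> \<bar>h (cis a) - h (cis b)\<bar>"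
      using no_delta t by (meson not_le)
    then show ?thesis using modcont_ge[of a b t h] by (meson ennreal_leI order_trans)
  qed
  have "(\<integral>\<^sup>+ t. indicator {0<..pi} t * ennreal (1/t) \<partial>lborel) * ennreal e
      = (\<integral>\<^sup>+ t. indicator {0<..pi} t * ennreal (1/t) * ennreal e \<partial>lborel)"
    by (rule nn_integral_multc[symmetric]) auto
  also have "\<dots> \<le> (\<integral>\<^sup>+ t. indicator {0<..pi} t * (modcont h t / ennreal t) \<partial>lborel)"
  proof (intro nn_integral_mono)
    fix t
    show "indicator {0<..pi} t * ennreal (1/t) * ennreal e \<le> indicator {0<..pi} t * (modcont h t / ennreal t)"
    proof (cases "t \<in> {0<..pi}")
      case True
      then have "ennreal (1/t) * ennreal e = ennreal e / ennreal t"
        using assms(2) by (simp add: divide_ennreal ennreal_mult[symmetric])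
      also have "\<dots> \<le> modcont h t / ennreal t"
        using ge[of t] True by (intro divide_right_mono_ennreal) auto
      finally show ?thesis using True by (simp add: mult.assoc)
    qed simp
  qed
  also have "\<dots> < \<infinity>" using assms(1) unfolding dini_continuous_def by simp
  finally show False using assms(2) by (simp add: nn_integral_inverse_diverges ennreal_mult_top)
qed

lemma dini_continuous_cis:
  assumes "dini_continuous h"
  shows "continuous_on UNIV (\<lambda>u. h (cis u))"
  unfolding continuous_on_iff
proof (intro ballI allI impI)
  fix x e :: real assume "e > 0"
  then obtain d where "d > 0" "\<And>a b. \<bar>a - b\<bar> \<le> d \<Longrightarrow> \<bar>h (cis a) - h (cis b)\<bar> < e"
    using dini_uniformly_continuous[OF assms] by blast
  then show "\<exists>d>0. \<forall>x'\<in>UNIV. dist x' x < d \<longrightarrow> dist (h (cis x')) (h (cis x)) < e"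
    by (intro exI[of _ d]) (auto simp: dist_real_def)
qed

lemma sphere_cis_Arg:
  assumes "norm w = 1"
  shows "w = cis (Arg w)" "-pi \<le> Arg w" "Arg w \<le> pi"
proof -
  have "w \<noteq> 0" using assms by auto
  then show "w = cis (Arg w)" using assms by (simp add: cis_Arg sgn_div_norm)
  show "-pi \<le> Arg w" "Arg w \<le> pi" using Arg_bounded[of w] by auto
qed

lemma dini_bounded:
  assumes "dini_continuous h"
  obtains M where "\<And>u. \<bar>h (cis u)\<bar> \<le> M"
proof -
  have "compact ((\<lambda>u. h (cis u)) ` {-pi..pi})"
    by (intro compact_continuous_image continuous_on_subset[OF dini_continuous_cis[OF assms]]) auto
  then obtain M where M: "\<And>y. y \<in> (\<lambda>u. h (cis u)) ` {-pi..pi} \<Longrightarrow> \<bar>y\<bar> \<le> M"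
    using compact_imp_bounded[of "(\<lambda>u. h (cis u)) ` {-pi..pi}"] unfolding bounded_iff real_norm_def
    by blast
  have "\<bar>h (cis u)\<bar> \<le> M" for u
  proof -
    have "cis u = cis (Arg (cis u))" "Arg (cis u) \<in> {-pi..pi}"
      using sphere_cis_Arg[of "cis u"] by auto
    then show ?thesis using M[of "h (cis u)"] by (metis image_eqI)
  qed
  then show thesis by (rule that)
qed

definition dini_modulus :: "(complex \<Rightarrow> real) \<Rightarrow> real \<Rightarrow> real" where
  "dini_modulus h x = enn2real (modcont h \<bar>x\<bar>)"

lemma dini_modulus_nonneg: "0 \<le> dini_modulus h x"
  unfolding dini_modulus_def by simp

lemma dini_modulus_even: "dini_modulus h (-x) = dini_modulus h x"
  unfolding dini_modulus_def by simp

lemma modcont_finite: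
  assumes "dini_continuous h"
  shows "modcont h t < \<infinity>"
proof -
  obtain M where "\<And>u. \<bar>h (cis u)\<bar> \<le> M" using dini_bounded[OF assms] by blast
  then have "modcont h t \<le> ennreal (2*M)"
  proof (intro modcont_le)
    fix a b :: real
    show "\<bar>h (cis a) - h (cis b)\<bar> \<le> 2*M" using \<open>\<And>u. \<bar>h (cis u)\<bar> \<le> M\<close>[of a] \<open>\<And>u. \<bar>h (cis u)\<bar> \<le> M\<close>[of b] by linarith
  qed
  then show ?thesis by (simp add: le_less_trans)
qed

lemma dini_modulus_eq:
  "dini_continuous h \<Longrightarrow> ennreal (dini_modulus h x) = modcont h \<bar>x\<bar>"
  unfolding dini_modulus_def using modcont_finite by simp

lemma dini_modulus_bound:
  assumes "dini_continuous h"
  shows "\<bar>h (cis a) - h (cis b)\<bar> \<le> dini_modulus h (a - b)"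
proof -
  have "ennreal \<bar>h (cis a) - h (cis b)\<bar> \<le> ennreal (dini_modulus h (a - b))"
    using modcont_ge[of a b "\<bar>a - b\<bar>" h] dini_modulus_eq[OF assms] by simp
  then show ?thesis using dini_modulus_nonneg by (simp add: ennreal_le_iff)
qed

lemma dini_modulus_measurable [measurable]:
  assumes "dini_continuous h"
  shows "dini_modulus h \<in> borel_measurable borel"
proof -
  have "mono (\<lambda>t. enn2real (modcont h t))"
    using modcont_mono[of h] modcont_finite[OF assms] by (intro monoI enn2real_mono) (auto simp: mono_def)
  then have "(\<lambda>t. enn2real (modcont h t)) \<in> borel_measurable borel" by (rule borel_measurable_mono)
  then show ?thesis unfolding dini_modulus_def[abs_def] by measurable
qed

lemma dini_modulus_over_abs_integrable:
  assumes dini: "dini_continuous h"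
  shows "integrable lborel (\<lambda>x. indicator {-pi..pi} x * (dini_modulus h x / \<bar>x\<bar>))"
proof -
  note [measurable] = dini_modulus_measurable[OF dini]
  define g where "g x = indicator {0<..pi} x * (dini_modulus h x / x)" for x :: real
  have g_measurable [measurable]: "g \<in> borel_measurable borel" unfolding g_def by measurable
  have g_nonneg: "0 \<le> g x" for x unfolding g_def by (auto simp: dini_modulus_nonneg split: split_indicator)
  have split: "indicator {-pi..pi} x * (dini_modulus h x / \<bar>x\<bar>) = g x + g (-x)" for x
    unfolding g_def using pi_gt_zero
    by (cases "x = 0") (auto simp: dini_modulus_even split: split_indicator)
  have "(\<integral>\<^sup>+ x. ennreal (g x) \<partial>lborel) = (\<integral>\<^sup>+ t. indicator {0<..pi} t * (modcont h t / ennreal t) \<partial>lborel)"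
  proof (intro nn_integral_cong)
    fix t :: real
    show "ennreal (g t) = indicator {0<..pi} t * (modcont h t / ennreal t)"
    proof (cases "t \<in> {0<..pi}")
      case True
      then have "ennreal (dini_modulus h t / t) = ennreal (dini_modulus h t) / ennreal t"
        by (simp add: divide_ennreal dini_modulus_nonneg)
      then show ?thesis unfolding g_def using True dini_modulus_eq[OF dini, of t] by simp
    qed (simp add: g_def)
  qed
  also have "\<dots> < \<infinity>" using dini unfolding dini_continuous_def .
  finally have g_finite: "(\<integral>\<^sup>+ x. ennreal (g x) \<partial>lborel) < \<infinity>" .
  have g_reflect: "(\<integral>\<^sup>+ x. ennreal (g (-x)) \<partial>lborel) = (\<integral>\<^sup>+ x. ennreal (g x) \<partial>lborel)"
    using nn_integral_real_affine[of "\<lambda>x. ennreal (g x)" "-1" 0] by simp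
  have "(\<integral>\<^sup>+ x. ennreal (norm (indicator {-pi..pi} x * (dini_modulus h x / \<bar>x\<bar>))) \<partial>lborel)
      = (\<integral>\<^sup>+ x. ennreal (g x) + ennreal (g (-x)) \<partial>lborel)"
  proof (intro nn_integral_cong)
    fix x :: real
    have "norm (indicator {-pi..pi} x * (dini_modulus h x / \<bar>x\<bar>)) = g x + g (-x)"
      unfolding split real_norm_def using g_nonneg[of x] g_nonneg[of "-x"] by simp
    then show "ennreal (norm (indicator {-pi..pi} x * (dini_modulus h x / \<bar>x\<bar>))) = ennreal (g x) + ennreal (g (-x))"
      using g_nonneg[of x] g_nonneg[of "-x"] by (simp add: ennreal_plus)
  qed
  also have "\<dots> = (\<integral>\<^sup>+ x. ennreal (g x) \<partial>lborel) + (\<integral>\<^sup>+ x. ennreal (g (-x)) \<partial>lborel)"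
    unfolding g_def by (rule nn_integral_add) auto
  also have "\<dots> < \<infinity>" using g_finite g_reflect by (simp add: ennreal_add_less_top)
  finally show ?thesis unfolding g_def by (intro integrableI_bounded) auto
qed

section \<open>The Herglotz kernel\<close>

text \<open>The Herglotz kernel \<open>(e^{iu} + z)/(e^{iu} - z)\<close>, and its form at \<open>z = r e^{i\<theta>}\<close> after the
  change of variables \<open>u = \<theta> - x\<close>, which no longer depends on \<open>\<theta>\<close>.\<close>

definition herglotz_kernel :: "real \<Rightarrow> complex \<Rightarrow> complex" where
  "herglotz_kernel u z = (cis u + z) / (cis u - z)"

definition radial_kernel :: "real \<Rightarrow> real \<Rightarrow> complex" where
  "radial_kernel r x = (cis (-x) + complex_of_real r) / (cis (-x) - complex_of_real r)"

lemma herglotz_kernel_radial: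
  "herglotz_kernel (\<theta> - x) (complex_of_real r * cis \<theta>) = radial_kernel r x"
proof -
  have "cis (\<theta> - x) = cis \<theta> * cis (-x)" by (simp add: cis_mult)
  moreover have "cis \<theta> * cis (-x) + complex_of_real r * cis \<theta> = cis \<theta> * (cis (-x) + complex_of_real r)"
    "cis \<theta> * cis (-x) - complex_of_real r * cis \<theta> = cis \<theta> * (cis (-x) - complex_of_real r)"
    by (simp_all add: algebra_simps)
  ultimately show ?thesis
    unfolding herglotz_kernel_def radial_kernel_def by (simp add: cis_neq_zero)
qed

lemma herglotz_kernel_continuous: "norm z < 1 \<Longrightarrow> continuous_on UNIV (\<lambda>u. herglotz_kernel u z)"
  unfolding herglotz_kernel_def by (intro continuous_intros) auto

lemma radial_kernel_continuous:
  assumes "0 \<le> r" "r < 1"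
  shows "continuous_on UNIV (radial_kernel r)"
proof -
  have "cis (-x) \<noteq> complex_of_real r" for x
    using assms by (metis abs_of_nonneg norm_cis norm_of_real order_less_irrefl)
  then show ?thesis unfolding radial_kernel_def by (intro continuous_intros) auto
qed

lemma radial_kernel_measurable [measurable]: "radial_kernel r \<in> borel_measurable borel"
  unfolding radial_kernel_def
  by (intro borel_measurable_divide borel_measurable_continuous_onI continuous_intros)

text \<open>On the circle itself the kernel is purely imaginary (it is \<open>i cot(x/2)\<close>).\<close>

lemma Re_radial_kernel_1: "Re (radial_kernel 1 x) = 0"
proof -
  have "(cos x + 1) * (cos x - 1) + (sin x)\<^sup>2 = 0" using sin_cos_squared_add[of x]
    by (simp add: power2_eq_square algebra_simps)
  then show ?thesis unfolding radial_kernel_def by (simp add: Re_divide power2_eq_square algebra_simps)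
qed

lemma one_minus_cos_ge:
  assumes "\<bar>x\<bar> \<le> pi"
  shows "x\<^sup>2 / 18 \<le> 1 - cos x"
proof -
  define y where "y = \<bar>x\<bar> / 2"
  have y: "0 \<le> y" "y \<le> pi/2" using assms unfolding y_def by auto
  have cos_x: "cos x = 1 - 2 * (sin y)\<^sup>2"
  proof -
    have "cos x = cos (2 * y)" unfolding y_def by (simp add: abs_real_def)
    then show ?thesis by (simp add: cos_double_sin)
  qed
  have "\<bar>sin y - (\<Sum>m<3. sin_coeff m * y ^ m)\<bar> \<le> inverse (fact 3) * \<bar>y\<bar> ^ 3"
    by (rule Maclaurin_sin_bound)
  then have "\<bar>sin y - y\<bar> \<le> y^3 / 6"
    using y(1) by (simp add: eval_nat_numeral sin_coeff_def fact_numeral divide_simps)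
  then have sin_lower: "y - y^3/6 \<le> sin y" by linarith
  have "y \<le> 2" using y pi_less_4 by simp
  then have "y * (y * y) \<le> y * 4" using y by (intro mult_left_mono) (auto intro: mult_mono[of y 2 y 2, simplified])
  then have "y/3 \<le> sin y" using sin_lower by (simp add: power3_eq_cube)
  then have "(y/3)\<^sup>2 \<le> (sin y)\<^sup>2" using y by (intro power_mono) auto
  then show ?thesis using cos_x unfolding y_def by (simp add: power2_eq_square)
qed

lemma radial_kernel_denominator_lower:
  assumes "1/2 \<le> r" "\<bar>x\<bar> \<le> pi"
  shows "\<bar>x\<bar> / 5 \<le> cmod (cis (-x) - complex_of_real r)"
proof -
  have norm_sq: "(cmod (cis (-x) - complex_of_real r))\<^sup>2 = (1 - r)\<^sup>2 + 2 * r * (1 - cos x)"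
  proof -
    have "(cmod (cis (-x) - complex_of_real r))\<^sup>2 = (cos x - r)\<^sup>2 + (sin x)\<^sup>2"
      by (simp add: cmod_power2)
    then show ?thesis using sin_cos_squared_add[of x] by (simp add: power2_eq_square algebra_simps)
  qed
  have "(\<bar>x\<bar> / 5)\<^sup>2 \<le> x\<^sup>2 / 18" by (simp add: power2_eq_square divide_simps)
  also have "\<dots> \<le> 1 - cos x" by (rule one_minus_cos_ge[OF assms(2)])
  also have "\<dots> \<le> 2 * r * (1 - cos x)"
    using mult_right_mono[of 1 "2*r" "1 - cos x"] assms(1) by simp
  also have "\<dots> \<le> (cmod (cis (-x) - complex_of_real r))\<^sup>2" unfolding norm_sq by simp
  finally show ?thesis by (rule power2_le_imp_le) simp
qed

lemma radial_kernel_bound: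
  assumes "1/2 \<le> r" "r \<le> 1" "\<bar>x\<bar> \<le> pi" "x \<noteq> 0"
  shows "cmod (radial_kernel r x) \<le> 10 / \<bar>x\<bar>"
proof -
  have "cmod (cis (-x) + complex_of_real r) \<le> 2"
    using norm_triangle_ineq[of "cis (-x)" "complex_of_real r"] assms by simp
  moreover have "\<bar>x\<bar> / 5 \<le> cmod (cis (-x) - complex_of_real r)" "0 < \<bar>x\<bar> / 5"
    using radial_kernel_denominator_lower assms by auto
  ultimately have "cmod (radial_kernel r x) \<le> 2 / (\<bar>x\<bar> / 5)"
    unfolding radial_kernel_def norm_divide by (intro frac_le) auto
  then show ?thesis by simp
qed

lemma radial_kernel_tendsto:
  assumes "\<bar>x\<bar> \<le> pi" "x \<noteq> 0"
  shows "((\<lambda>t. radial_kernel (1 - inverse t) x) \<longlongrightarrow> radial_kernel 1 x) at_top"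
proof -
  have "\<bar>x\<bar> / 5 \<le> cmod (cis (-x) - complex_of_real 1)"
    by (rule radial_kernel_denominator_lower) (use assms in auto)
  then have nz: "cis (-x) - complex_of_real 1 \<noteq> 0" using assms by auto
  have "((\<lambda>t::real. inverse t) \<longlongrightarrow> 0) at_top"
    by (rule tendsto_inverse_0_at_top[OF filterlim_ident])
  then have "((\<lambda>t. (cis (-x) + complex_of_real (1 - inverse t)) / (cis (-x) - complex_of_real (1 - inverse t)))
      \<longlongrightarrow> (cis (-x) + complex_of_real (1 - 0)) / (cis (-x) - complex_of_real (1 - 0))) at_top"
    using nz by (intro tendsto_intros) auto
  then show ?thesis unfolding radial_kernel_def by simp
qed

text \<open>Angles range over \<open>[0, 2 pi)\<close> (as in the definition of \<open>angles\<close>); for continuous periodic integrands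
  we pass freely to the Henstock-Kurzweil integral over \<open>[0, 2 pi]\<close> and to \<open>[-pi, pi]\<close>.\<close>

lemma measure_period: "measure lebesgue {0..<2*pi} = 2*pi"
  using pi_gt_zero by (simp add: measure_completion)

lemma emeasure_period_finite: "emeasure lebesgue {0..<2*pi} < \<infinity>"
  by (simp add: emeasure_completion)

lemma borel_measurable_lebesgue_real:
  "f \<in> borel_measurable borel \<Longrightarrow> (f :: real \<Rightarrow> 'a::topological_space) \<in> borel_measurable lebesgue"
  by (rule measurable_completion) simp

lemma set_integrable_const_period: "set_integrable lebesgue {0..<2*pi} (\<lambda>t. c::real)"
  unfolding set_integrable_def using emeasure_period_finite by (intro integrable_indicator) auto

lemma continuous_set_integrable_period:
  fixes F :: "real \<Rightarrow> 'a::euclidean_space"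
  assumes "continuous_on UNIV F"
  shows "set_integrable lebesgue {0..<2*pi} F"
proof -
  have "set_integrable lebesgue {0..2*pi} F"
    by (rule absolutely_integrable_continuous_real) (rule continuous_on_subset[OF assms], auto)
  then show ?thesis by (rule set_integrable_subset) auto
qed

lemma continuous_set_integral_period:
  fixes F :: "real \<Rightarrow> 'a::euclidean_space"
  assumes "continuous_on UNIV F"
  shows "(LINT u:{0..<2*pi}|lebesgue. F u) = integral {0..2*pi} F"
proof -
  have closed: "set_integrable lebesgue {0..2*pi} F"
    by (rule absolutely_integrable_continuous_real) (rule continuous_on_subset[OF assms], auto)
  have "(LINT u:{0..<2*pi}|lebesgue. F u) = (LINT u:{0..2*pi}|lebesgue. F u)"
  proof (rule set_integral_cong_set)
    show "set_borel_measurable lebesgue {0..2*pi} F" "set_borel_measurable lebesgue {0..<2*pi} F"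
      using closed continuous_set_integrable_period[OF assms]
      by (auto simp: set_integrable_def set_borel_measurable_def)
    show "AE x in lebesgue. (x \<in> {0..2*pi}) = (x \<in> {0..<2*pi})"
      using AE_completion[OF AE_lborel_singleton[of "2*pi"]] by eventually_elim auto
  qed
  also have "\<dots> = integral {0..2*pi} F" by (rule set_lebesgue_integral_eq_integral(2)[OF closed])
  finally show ?thesis .
qed

lemma continuous_set_integral_sym:
  fixes F :: "real \<Rightarrow> 'a::euclidean_space"
  assumes "continuous_on UNIV F"
  shows "set_integrable lebesgue {-pi..pi} F" "(LINT x:{-pi..pi}|lebesgue. F x) = integral {-pi..pi} F"
proof -
  show int: "set_integrable lebesgue {-pi..pi} F"
    by (rule absolutely_integrable_continuous_real) (rule continuous_on_subset[OF assms], auto)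
  show "(LINT x:{-pi..pi}|lebesgue. F x) = integral {-pi..pi} F"
    by (rule set_lebesgue_integral_eq_integral(2)[OF int])
qed

lemma set_integral_bound_period:
  fixes f :: "real \<Rightarrow> 'b::{banach, second_countable_topology}"
  assumes "set_integrable lebesgue {0..<2*pi} f" "\<And>x. x \<in> {0..<2*pi} \<Longrightarrow> norm (f x) \<le> B"
  shows "norm (LINT x:{0..<2*pi}|lebesgue. f x) \<le> 2*pi*B"
proof -
  have "norm (LINT x:{0..<2*pi}|lebesgue. f x) \<le> (LINT x:{0..<2*pi}|lebesgue. norm (f x))"
    by (rule set_integral_norm_bound[OF assms(1)])
  also have "\<dots> \<le> (LINT x:{0..<2*pi}|lebesgue. B)"
  proof (rule set_integral_mono)
    show "set_integrable lebesgue {0..<2*pi} (\<lambda>x. norm (f x))"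
      using assms(1) by (rule set_integrable_norm)
    show "set_integrable lebesgue {0..<2*pi} (\<lambda>x. B)"
      using emeasure_period_finite by (simp add: set_integrable_def)
  qed (use assms(2) in auto)
  also have "\<dots> = 2*pi*B" using emeasure_period_finite by (simp add: set_integral_const measure_period)
  finally show ?thesis .
qed

lemma set_integral_sum:
  fixes f :: "'i \<Rightarrow> 'a \<Rightarrow> 'b::{banach, second_countable_topology}"
  assumes "finite S" "\<And>i. i \<in> S \<Longrightarrow> set_integrable M A (f i)"
  shows "set_integrable M A (\<lambda>x. \<Sum>i\<in>S. f i x)"
    and "(LINT x:A|M. (\<Sum>i\<in>S. f i x)) = (\<Sum>i\<in>S. LINT x:A|M. f i x)"
proof -
  show "set_integrable M A (\<lambda>x. \<Sum>i\<in>S. f i x)"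
    unfolding set_integrable_def scaleR_sum_right
    by (rule Bochner_Integration.integrable_sum) (use assms in \<open>auto simp: set_integrable_def\<close>)
  show "(LINT x:A|M. (\<Sum>i\<in>S. f i x)) = (\<Sum>i\<in>S. LINT x:A|M. f i x)"
    unfolding set_lebesgue_integral_def scaleR_sum_right
    by (rule Bochner_Integration.integral_sum) (use assms in \<open>auto simp: set_integrable_def\<close>)
qed

lemma integral_periodic_shift:
  fixes F :: "real \<Rightarrow> 'a::euclidean_space"
  assumes cont: "continuous_on UNIV F" and per: "\<And>x. F (x + 2*pi) = F x"
    and a: "-2*pi \<le> a" "a \<le> 0"
  shows "integral {a..a+2*pi} F = integral {0..2*pi} F"
proof -
  have int: "F integrable_on {s..t}" for s t
    by (rule integrable_continuous_real) (rule continuous_on_subset[OF cont], auto)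
  have "integral {a..a+2*pi} F = integral {a..0} F + integral {0..a+2*pi} F"
    using Henstock_Kurzweil_Integration.integral_combine[of a 0 "a+2*pi" F] int a by auto
  moreover have "integral {a..0} F = integral {a+2*pi..2*pi} F"
  proof -
    have "integral {(a+2*pi)-2*pi..2*pi-2*pi} (\<lambda>x. F (x + 2*pi)) = integral {a+2*pi..2*pi} F"
      by (rule integral_shift_real_ivl)
    then show ?thesis by (simp add: per)
  qed
  moreover have "integral {0..a+2*pi} F + integral {a+2*pi..2*pi} F = integral {0..2*pi} F"
    using Henstock_Kurzweil_Integration.integral_combine[of 0 "a+2*pi" "2*pi" F] int a by auto
  ultimately show ?thesis by (simp add: algebra_simps)
qed

lemma integral_periodic_reflect:
  fixes F :: "real \<Rightarrow> 'a::euclidean_space"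
  assumes cont: "continuous_on UNIV F" and per: "\<And>x. F (x + 2*pi) = F x"
    and \<theta>: "-pi \<le> \<theta>" "\<theta> \<le> pi"
  shows "integral {-pi..pi} (\<lambda>x. F (\<theta> - x)) = integral {0..2*pi} F"
proof -
  have "integral {-pi..pi} (\<lambda>x. F (\<theta> - x)) = integral {-pi..pi} (\<lambda>x. (\<lambda>y. F (y + \<theta>)) (-x))"
    by (simp add: algebra_simps)
  also have "\<dots> = integral {-pi..pi} (\<lambda>y. F (y + \<theta>))"
    using Henstock_Kurzweil_Integration.integral_reflect_real[of pi "-pi" "\<lambda>y. F (y + \<theta>)"] by simp
  also have "\<dots> = integral {(\<theta>-pi)-\<theta>..(\<theta>+pi)-\<theta>} (\<lambda>y. F (y + \<theta>))" by simp
  also have "\<dots> = integral {\<theta>-pi..\<theta>+pi} F" by (rule integral_shift_real_ivl)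
  also have "\<dots> = integral {(\<theta>-pi)..(\<theta>-pi)+2*pi} F" by (simp add: algebra_simps)
  also have "\<dots> = integral {0..2*pi} F"
    by (rule integral_periodic_shift[OF cont per]) (use \<theta> in auto)
  finally show ?thesis .
qed

lemma set_integrable_sym_dominated:
  fixes g :: "real \<Rightarrow> 'b::{banach, second_countable_topology}"
  assumes "g \<in> borel_measurable borel" "integrable lborel (\<lambda>x. indicator {-pi..pi} x * B x)"
    and "AE x in lborel. x \<in> {-pi..pi} \<longrightarrow> norm (g x) \<le> B x"
  shows "set_integrable lebesgue {-pi..pi} g"
proof -
  have meas: "(\<lambda>x. indicator {-pi..pi} x *\<^sub>R g x) \<in> borel_measurable lborel"
    using assms(1) by measurable
  have "integrable lborel (\<lambda>x. indicator {-pi..pi} x *\<^sub>R g x)"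
    by (rule Bochner_Integration.integrable_bound[OF assms(2) meas])
      (use assms(3) in \<open>eventually_elim, auto split: split_indicator\<close>)
  then show ?thesis unfolding set_integrable_def using integrable_completion[OF meas] by blast
qed

lemma set_integrable_mult_continuous:
  fixes g \<phi> :: "real \<Rightarrow> complex"
  assumes g: "set_integrable lebesgue {0..<2*pi} g" and \<phi>: "continuous_on UNIV \<phi>"
  shows "set_integrable lebesgue {0..<2*pi} (\<lambda>t. g t * \<phi> t)"
proof -
  have "compact (\<phi> ` {0..2*pi})"
    by (intro compact_continuous_image continuous_on_subset[OF \<phi>]) auto
  then obtain C where C: "\<And>t. t \<in> {0..<2*pi} \<Longrightarrow> norm (\<phi> t) \<le> C"
    using compact_imp_bounded[of "\<phi> ` {0..2*pi}"] unfolding bounded_iff by fastforce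
  have gi: "integrable lebesgue (\<lambda>t. indicator {0..<2*pi} t *\<^sub>R g t)"
    using g unfolding set_integrable_def .
  have "(\<lambda>t. (indicator {0..<2*pi} t *\<^sub>R g t) * \<phi> t) \<in> borel_measurable lebesgue"
    using borel_measurable_integrable[OF gi]
      borel_measurable_lebesgue_real[OF borel_measurable_continuous_onI[OF \<phi>]]
    by (rule borel_measurable_times)
  then have meas: "(\<lambda>t. indicator {0..<2*pi} t *\<^sub>R (g t * \<phi> t)) \<in> borel_measurable lebesgue"
    by simp
  have "integrable lebesgue (\<lambda>t. indicator {0..<2*pi} t *\<^sub>R (g t * \<phi> t))"
  proof (rule Bochner_Integration.integrable_bound[OF _ meas])
    show "integrable lebesgue (\<lambda>t. C * norm (indicator {0..<2*pi} t *\<^sub>R g t))"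
      using gi by (intro integrable_mult_right integrable_norm)
    show "AE t in lebesgue. norm (indicator {0..<2*pi} t *\<^sub>R (g t * \<phi> t))
        \<le> norm (C * norm (indicator {0..<2*pi} t *\<^sub>R g t))"
    proof (rule AE_I2)
      fix t
      show "norm (indicator {0..<2*pi} t *\<^sub>R (g t * \<phi> t)) \<le> norm (C * norm (indicator {0..<2*pi} t *\<^sub>R g t))"
      proof (cases "t \<in> {0..<2*pi}")
        case True
        have "0 \<le> C" using C[OF True] norm_ge_zero order_trans by blast
        then show ?thesis using mult_right_mono[OF C[OF True] norm_ge_zero[of "g t"]] True
          by (simp add: norm_mult mult.commute)
      qed simp
    qed
  qed
  then show ?thesis unfolding set_integrable_def .
qed

lemma set_borel_measurable_mult:
  fixes F G :: "real \<Rightarrow> 'b::{real_normed_algebra, second_countable_topology}"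
  assumes "set_borel_measurable lebesgue A F" "set_borel_measurable lebesgue A G"
  shows "set_borel_measurable lebesgue A (\<lambda>x. F x * G x)"
proof -
  have "(\<lambda>x. (indicator A x *\<^sub>R F x) * (indicator A x *\<^sub>R G x)) \<in> borel_measurable lebesgue"
    using assms unfolding set_borel_measurable_def by (rule borel_measurable_times)
  moreover have "(\<lambda>x. (indicator A x *\<^sub>R F x) * (indicator A x *\<^sub>R G x)) = (\<lambda>x. indicator A x *\<^sub>R (F x * G x))"
    by (auto simp: indicator_def)
  ultimately show ?thesis unfolding set_borel_measurable_def by simp
qed

lemma set_borel_measurable_diff:
  fixes F G :: "real \<Rightarrow> 'b::{real_normed_vector, second_countable_topology}"
  assumes "set_borel_measurable lebesgue A F" "set_borel_measurable lebesgue A G"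
  shows "set_borel_measurable lebesgue A (\<lambda>x. F x - G x)"
  using assms unfolding set_borel_measurable_def by (simp add: scaleR_diff_right)

lemma set_borel_measurable_compose:
  fixes F :: "real \<Rightarrow> 'b::{real_normed_vector, second_countable_topology}"
    and \<phi> :: "'b \<Rightarrow> 'c::{real_normed_vector, second_countable_topology}"
  assumes "set_borel_measurable lebesgue A F" "continuous_on UNIV \<phi>" "\<phi> 0 = 0"
  shows "set_borel_measurable lebesgue A (\<lambda>x. \<phi> (F x))"
proof -
  have "(\<lambda>x. \<phi> (indicator A x *\<^sub>R F x)) \<in> borel_measurable lebesgue"
    using assms(1) borel_measurable_continuous_onI[OF assms(2)]
    unfolding set_borel_measurable_def by (rule measurable_compose)
  moreover have "(\<lambda>x. \<phi> (indicator A x *\<^sub>R F x)) = (\<lambda>x. indicator A x *\<^sub>R \<phi> (F x))"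
    using assms(3) by (auto simp: indicator_def)
  ultimately show ?thesis unfolding set_borel_measurable_def by simp
qed

lemma set_borel_measurable_norm_sq:
  fixes F :: "real \<Rightarrow> complex"
  assumes "set_borel_measurable lebesgue A F"
  shows "set_borel_measurable lebesgue A (\<lambda>x. norm (F x))"
    and "set_borel_measurable lebesgue A (\<lambda>x. (norm (F x))\<^sup>2)"
  using set_borel_measurable_compose[OF assms, of "\<lambda>z. norm z"]
    set_borel_measurable_compose[OF assms, of "\<lambda>z. (norm z)\<^sup>2"]
  by (auto intro: continuous_intros)

lemma set_borel_measurable_Re_cnj:
  fixes F :: "real \<Rightarrow> complex"
  assumes "set_borel_measurable lebesgue A F"
  shows "set_borel_measurable lebesgue A (\<lambda>x. Re (F x))"
    and "set_borel_measurable lebesgue A (\<lambda>x. cnj (F x))"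
  using set_borel_measurable_compose[OF assms, of "\<lambda>z. Re z"]
    set_borel_measurable_compose[OF assms, of "\<lambda>z. cnj z"] linear_continuous_on[OF bounded_linear_Re]
  by (auto intro: continuous_intros)

lemma set_borel_measurable_continuous:
  fixes \<phi> :: "real \<Rightarrow> 'b::{real_normed_vector, second_countable_topology}"
  assumes "continuous_on UNIV \<phi>" "A \<in> sets lebesgue"
  shows "set_borel_measurable lebesgue A \<phi>"
  unfolding set_borel_measurable_def
  using assms(2) borel_measurable_lebesgue_real[OF borel_measurable_continuous_onI[OF assms(1)]]
  by (intro borel_measurable_scaleR borel_measurable_indicator) auto

section \<open>The Herglotz transform of a continuous function of the angle\<close>

text \<open>For \<open>\<phi>\<close> continuous on the line, \<open>T \<phi> z = \<integral>_0^{2pi} K(u,z) \<phi>(u) du\<close>.  Expanding the kernel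
  in a geometric series shows that \<open>T \<phi>\<close> is the uniform limit on every smaller disc of the
  polynomials \<open>-c_0 + 2 \<Sum>_{n<N} c_n z^n\<close>, where \<open>c_n\<close> are the Fourier coefficients of \<open>\<phi>\<close>.\<close>

definition herglotz_transform :: "(real \<Rightarrow> complex) \<Rightarrow> complex \<Rightarrow> complex" where
  "herglotz_transform \<phi> z = (LINT u:{0..<2*pi}|lebesgue. herglotz_kernel u z * \<phi> u)"

definition fourier_coeff :: "(real \<Rightarrow> complex) \<Rightarrow> nat \<Rightarrow> complex" where
  "fourier_coeff \<phi> n = (LINT u:{0..<2*pi}|lebesgue. cis (-(real n * u)) * \<phi> u)"

definition taylor_poly :: "(real \<Rightarrow> complex) \<Rightarrow> nat \<Rightarrow> complex \<Rightarrow> complex" where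
  "taylor_poly \<phi> N z = - fourier_coeff \<phi> 0 + 2 * (\<Sum>n<N. fourier_coeff \<phi> n * z^n)"

lemma herglotz_kernel_geometric:
  assumes "norm z < 1"
  shows "norm (herglotz_kernel u z - (-1 + 2 * (\<Sum>n<N. z^n * cis (-(real n * u)))))
    \<le> 2 * norm z ^ N / (1 - norm z)"
proof -
  define q where "q = z * cis (-u)"
  have norm_q: "norm q = norm z" unfolding q_def by (simp add: norm_mult)
  then have q1: "1 - q \<noteq> 0" using assms by auto
  have kernel: "herglotz_kernel u z = (1 + q) / (1 - q)"
  proof -
    have "cis u - z \<noteq> 0" using assms by auto
    moreover have "(cis u + z) * (1 - q) = (1 + q) * (cis u - z)"
      unfolding q_def by (simp add: algebra_simps cis_mult)
    ultimately show ?thesis unfolding herglotz_kernel_def using q1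
      by (simp add: divide_eq_eq eq_divide_eq)
  qed
  have "z^n * cis (-(real n * u)) = q^n" for n
  proof -
    have "q^n = z^n * cis (-u)^n" unfolding q_def by (rule power_mult_distrib)
    also have "cis (-u)^n = cis (real n * (-u))" by (rule Complex.DeMoivre)
    finally show ?thesis by simp
  qed
  then have "(\<Sum>n<N. z^n * cis (-(real n * u))) = (\<Sum>n<N. q^n)" by simp
  also have "\<dots> = (1 - q^N) / (1 - q)" using q1 by (simp add: sum_gp_strict)
  finally have sum: "(\<Sum>n<N. z^n * cis (-(real n * u))) = (1 - q^N) / (1 - q)" .
  have "(1 + q) / (1 - q) - (-1 + 2 * ((1 - q^N) / (1 - q))) = 2 * q^N / (1 - q)"
  proof -
    define w where "w = 1 / (1 - q)"
    have "(1 - q) * w = 1" unfolding w_def using q1 by simp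
    then have "(1+q)*w - (-1 + 2*((1-q^N)*w)) = 2*q^N*w" by (simp add: algebra_simps)
    then show ?thesis unfolding w_def by (simp add: divide_inverse)
  qed
  then have "herglotz_kernel u z - (-1 + 2 * (\<Sum>n<N. z^n * cis (-(real n * u)))) = 2 * q^N / (1 - q)"
    unfolding kernel sum .
  moreover have "1 - norm z \<le> norm (1 - q)"
    using norm_triangle_ineq2[of 1 q] norm_q by simp
  ultimately show ?thesis
    using assms by (simp add: norm_divide norm_mult norm_power norm_q frac_le)
qed

lemma herglotz_transform_taylor_error:
  assumes z: "norm z < 1" and \<phi>: "continuous_on UNIV \<phi>" and bound: "\<And>u. norm (\<phi> u) \<le> M"
  shows "norm (herglotz_transform \<phi> z - taylor_poly \<phi> N z) \<le> 2*pi*(2 * norm z^N / (1 - norm z) * M)"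
proof -
  define P where "P u = -1 + 2 * (\<Sum>n<N. z^n * cis (-(real n * u)))" for u
  have int_coeff: "set_integrable lebesgue {0..<2*pi} (\<lambda>u. cis (-(real n * u)) * \<phi> u)" for n
    by (rule continuous_set_integrable_period) (intro continuous_intros \<phi>)
  have int_kernel: "set_integrable lebesgue {0..<2*pi} (\<lambda>u. herglotz_kernel u z * \<phi> u)"
    by (rule continuous_set_integrable_period) (intro continuous_intros \<phi> herglotz_kernel_continuous z)
  have int_\<phi>: "set_integrable lebesgue {0..<2*pi} \<phi>"
    by (rule continuous_set_integrable_period[OF \<phi>])
  have P_expand: "P u * \<phi> u = (\<Sum>n<N. 2 * z^n * (cis (-(real n * u)) * \<phi> u)) - \<phi> u" for u
    unfolding P_def by (simp add: algebra_simps sum_distrib_left sum_distrib_right)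
  have int_sum: "set_integrable lebesgue {0..<2*pi} (\<lambda>u. \<Sum>n<N. 2 * z^n * (cis (-(real n * u)) * \<phi> u))"
    by (intro set_integral_sum(1)) (auto intro!: int_coeff)
  have int_P: "set_integrable lebesgue {0..<2*pi} (\<lambda>u. P u * \<phi> u)"
    unfolding P_expand by (intro set_integral_diff(1) int_sum int_\<phi>)
  have "(LINT u:{0..<2*pi}|lebesgue. P u * \<phi> u)
      = (LINT u:{0..<2*pi}|lebesgue. (\<Sum>n<N. 2 * z^n * (cis (-(real n * u)) * \<phi> u)))
        - (LINT u:{0..<2*pi}|lebesgue. \<phi> u)"
    unfolding P_expand by (rule set_integral_diff(2)[OF int_sum int_\<phi>])
  also have "(LINT u:{0..<2*pi}|lebesgue. (\<Sum>n<N. 2 * z^n * (cis (-(real n * u)) * \<phi> u)))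
      = (\<Sum>n<N. 2 * z^n * fourier_coeff \<phi> n)"
    by (subst set_integral_sum(2)) (auto intro!: int_coeff simp: fourier_coeff_def)
  also have "(LINT u:{0..<2*pi}|lebesgue. \<phi> u) = fourier_coeff \<phi> 0"
    unfolding fourier_coeff_def by simp
  finally have integral_P: "(LINT u:{0..<2*pi}|lebesgue. P u * \<phi> u) = taylor_poly \<phi> N z"
    unfolding taylor_poly_def by (simp add: sum_distrib_left algebra_simps)
  have "herglotz_transform \<phi> z - taylor_poly \<phi> N z
      = (LINT u:{0..<2*pi}|lebesgue. (herglotz_kernel u z - P u) * \<phi> u)"
    unfolding herglotz_transform_def integral_P[symmetric] left_diff_distrib
    by (rule set_integral_diff(2)[symmetric, OF int_kernel int_P])
  also have "norm \<dots> \<le> 2*pi*(2 * norm z^N / (1 - norm z) * M)"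
  proof (rule set_integral_bound_period)
    show "set_integrable lebesgue {0..<2*pi} (\<lambda>u. (herglotz_kernel u z - P u) * \<phi> u)"
      unfolding left_diff_distrib by (intro set_integral_diff(1) int_kernel int_P)
    fix u
    have "norm (herglotz_kernel u z - P u) \<le> 2 * norm z ^ N / (1 - norm z)"
      unfolding P_def by (rule herglotz_kernel_geometric[OF z])
    then show "norm ((herglotz_kernel u z - P u) * \<phi> u) \<le> 2 * norm z ^ N / (1 - norm z) * M"
      unfolding norm_mult by (intro mult_mono bound) (use z in auto)
  qed
  finally show ?thesis .
qed

lemma herglotz_transform_taylor_uniform:
  assumes \<phi>: "continuous_on UNIV \<phi>" and bound: "\<And>u. norm (\<phi> u) \<le> M"
    and \<rho>: "0 \<le> \<rho>" "\<rho> < 1" and e: "e > 0"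
  obtains N where "\<And>z. norm z \<le> \<rho> \<Longrightarrow> norm (herglotz_transform \<phi> z - taylor_poly \<phi> N z) \<le> e"
proof -
  have M: "0 \<le> M" using bound[of 0] norm_ge_zero order_trans by blast
  have "(\<lambda>N. 2*pi*(2 * \<rho>^N / (1 - \<rho>) * M)) \<longlonglongrightarrow> 2*pi*(2 * 0 / (1 - \<rho>) * M)"
    using \<rho> by (intro tendsto_intros LIMSEQ_power_zero) auto
  then have "eventually (\<lambda>N. 2*pi*(2 * \<rho>^N / (1 - \<rho>) * M) < e) sequentially"
    using e by (intro order_tendstoD(2)) auto
  then obtain N where N: "2*pi*(2 * \<rho>^N / (1 - \<rho>) * M) < e"
    by (auto simp: eventually_sequentially)
  have "norm (herglotz_transform \<phi> z - taylor_poly \<phi> N z) \<le> e" if z: "norm z \<le> \<rho>" for z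
  proof -
    have "2 * norm z^N / (1 - norm z) \<le> 2 * \<rho>^N / (1 - \<rho>)"
      using z \<rho> by (intro frac_le mult_left_mono power_mono) auto
    then have "2*pi*(2 * norm z^N / (1 - norm z) * M) \<le> 2*pi*(2 * \<rho>^N / (1 - \<rho>) * M)"
      using M by (intro mult_left_mono mult_right_mono) auto
    then show ?thesis
      using herglotz_transform_taylor_error[OF _ \<phi> bound, of z N] z \<rho> N by linarith
  qed
  then show thesis by (rule that)
qed

lemma integral_cis_multiple:
  assumes "n \<ge> 1"
  shows "(LINT u:{0..<2*pi}|lebesgue. cis (-(real n * u))) = 0"
proof -
  define G where "G w = \<i> * exp (-(\<i> * of_nat n * w)) / of_nat n" for w :: complex
  have n0: "(of_nat n :: complex) \<noteq> 0" using assms by simp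
  have dG: "(G has_field_derivative exp (-(\<i> * of_nat n * w))) (at w)" for w
    unfolding G_def using n0
    by (auto intro!: derivative_eq_intros simp: mult.left_commute[of \<i>])
  have cis_exp: "cis (-(real n * x)) = exp (-(\<i> * of_nat n * complex_of_real x))" for x
    by (simp add: cis_conv_exp mult.assoc)
  have "((\<lambda>x. cis (-(real n * x))) has_integral (G (of_real (2*pi)) - G (of_real 0))) {0..2*pi}"
    unfolding cis_exp
    by (rule fundamental_theorem_of_calculus) (auto intro!: has_vector_derivative_real_field[OF dG])
  moreover have "G (of_real (2*pi)) = G (of_real 0)"
    using cis_multiple_2pi[of "- real n"] cis_exp[of "2*pi"] unfolding G_def
    by (simp add: mult.commute mult.left_commute)
  ultimately have "integral {0..2*pi} (\<lambda>x. cis (-(real n * x))) = 0" by (simp add: integral_unique)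
  then show ?thesis by (subst continuous_set_integral_period) (auto intro!: continuous_intros)
qed

lemma herglotz_transform_one:
  assumes "norm z < 1"
  shows "herglotz_transform (\<lambda>_. 1) z = 2*pi"
proof -
  have coeff: "fourier_coeff (\<lambda>_. 1) n = (if n = 0 then 2*pi else 0)" for n
    using integral_cis_multiple[of n] emeasure_period_finite
    by (auto simp: fourier_coeff_def set_integral_const measure_period scaleR_conv_of_real)
  have taylor: "taylor_poly (\<lambda>_. 1) (Suc N) z = 2*pi" for N
  proof -
    have "(\<Sum>n<Suc N. fourier_coeff (\<lambda>_. 1) n * z^n) = (\<Sum>n<Suc N. if n = 0 then 2*complex_of_real pi else 0)"
      by (intro sum.cong refl) (simp add: coeff)
    then show ?thesis unfolding taylor_poly_def by (simp add: coeff sum.delta)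
  qed
  have bound: "norm (herglotz_transform (\<lambda>_. 1) z - 2*pi) \<le> 2*pi*(2 * norm z^Suc N / (1 - norm z) * 1)"
    for N
    using herglotz_transform_taylor_error[OF assms, of "\<lambda>_. 1" 1 "Suc N"] by (simp add: taylor)
  have "(\<lambda>N. 2*pi*(2 * norm z^Suc N / (1 - norm z) * 1)) \<longlonglongrightarrow> 2*pi*(2 * 0 / (1 - norm z) * 1)"
    using assms by (intro tendsto_intros LIMSEQ_power_zero LIMSEQ_Suc) auto
  then have "norm (herglotz_transform (\<lambda>_. 1) z - 2*pi) \<le> 0"
    using bound by (intro LIMSEQ_le_const) auto
  then show ?thesis by simp
qed

lemma herglotz_transform_radial:
  assumes \<phi>: "continuous_on UNIV \<phi>" and per: "\<And>x. \<phi> (x + 2*pi) = \<phi> x"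
    and r: "0 \<le> r" "r < 1" and \<theta>: "-pi \<le> \<theta>" "\<theta> \<le> pi"
  shows "herglotz_transform \<phi> (complex_of_real r * cis \<theta>)
    = (LINT x:{-pi..pi}|lebesgue. radial_kernel r x * \<phi> (\<theta> - x))"
proof -
  define z where "z = complex_of_real r * cis \<theta>"
  have z: "norm z < 1" unfolding z_def using r by (simp add: norm_mult)
  define F where "F u = herglotz_kernel u z * \<phi> u" for u
  have F_cont: "continuous_on UNIV F"
    unfolding F_def by (intro continuous_intros herglotz_kernel_continuous z \<phi>)
  have F_per: "F (x + 2*pi) = F x" for x
    unfolding F_def herglotz_kernel_def by (simp add: per cis.ctr)
  have "herglotz_transform \<phi> z = integral {0..2*pi} F"
    unfolding herglotz_transform_def F_def[symmetric] by (rule continuous_set_integral_period[OF F_cont])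
  also have "\<dots> = integral {-pi..pi} (\<lambda>x. F (\<theta> - x))"
    by (rule integral_periodic_reflect[OF F_cont F_per \<theta>, symmetric])
  also have "\<dots> = (LINT x:{-pi..pi}|lebesgue. F (\<theta> - x))"
    by (rule continuous_set_integral_sym(2)[symmetric])
      (intro continuous_intros continuous_on_compose2[OF F_cont], auto)
  also have "\<dots> = (LINT x:{-pi..pi}|lebesgue. radial_kernel r x * \<phi> (\<theta> - x))"
    unfolding F_def z_def herglotz_kernel_radial ..
  finally show ?thesis unfolding z_def .
qed

definition hcis :: "(complex \<Rightarrow> real) \<Rightarrow> real \<Rightarrow> complex" where
  "hcis h u = complex_of_real (h (cis u))"

lemma hcis_continuous: "dini_continuous h \<Longrightarrow> continuous_on UNIV (hcis h)"
  unfolding hcis_def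
  by (intro continuous_on_compose2[OF continuous_on_of_real] dini_continuous_cis) auto

lemma hcis_periodic: "hcis h (x + 2*pi) = hcis h x"
  unfolding hcis_def by (simp add: cis.ctr)

lemma norm_scale_inverse_2pi: "norm (complex_of_real (1/(2*pi)) * w) = norm w / (2*pi)"
  by (simp add: norm_divide)

lemma herglotz_eq_transform:
  assumes vanish: "\<And>u. cis u \<notin> I \<Longrightarrow> h (cis u) = 0"
  shows "herglotz I h z = complex_of_real (1/(2*pi)) * herglotz_transform (hcis h) z"
proof -
  have "indicator (angles I) t *\<^sub>R ((cis t + z) / (cis t - z) * complex_of_real (h (cis t)))
      = indicator {0..<2*pi} t *\<^sub>R (herglotz_kernel t z * hcis h t)" for t
    using vanish[of t] unfolding angles_def herglotz_kernel_def hcis_def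
    by (auto split: split_indicator)
  then show ?thesis
    unfolding herglotz_def herglotz_transform_def set_lebesgue_integral_def by simp
qed

lemma continuous_on_uniform_approx:
  fixes f :: "'a::metric_space \<Rightarrow> 'b::metric_space"
  assumes "\<And>e. e > 0 \<Longrightarrow> \<exists>g. continuous_on S g \<and> (\<forall>x\<in>S. dist (f x) (g x) \<le> e)"
  shows "continuous_on S f"
  unfolding continuous_on_iff
proof (intro ballI allI impI)
  fix x e assume x: "x \<in> S" and e: "(e::real) > 0"
  obtain g where g: "continuous_on S g" "\<And>y. y \<in> S \<Longrightarrow> dist (f y) (g y) \<le> e/3"
    using assms[of "e/3"] e by auto
  obtain d where d: "d > 0" "\<And>y. y \<in> S \<Longrightarrow> dist y x < d \<Longrightarrow> dist (g y) (g x) < e/3"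
    using g(1) x e unfolding continuous_on_iff by (metis divide_pos_pos zero_less_numeral)
  have "dist (f y) (f x) < e" if y: "y \<in> S" "dist y x < d" for y
  proof -
    have "dist (f y) (f x) \<le> dist (f y) (g y) + dist (g y) (g x) + dist (g x) (f x)"
      using dist_triangle[of "f y" "f x" "g y"] dist_triangle[of "g y" "f x" "g x"] by linarith
    also have "\<dots> < e/3 + e/3 + e/3"
      using g(2)[OF y(1)] d(2)[OF y] g(2)[OF x] by (simp add: dist_commute)
    finally show ?thesis by simp
  qed
  then show "\<exists>d>0. \<forall>y\<in>S. dist y x < d \<longrightarrow> dist (f y) (f x) < e" using d(1) by blast
qed

text \<open>Inside the disc, the Herglotz integral is the uniform limit of polynomials on every
  smaller disc, hence continuous.\<close>

lemma herglotz_taylor_approx: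
  assumes dini: "dini_continuous h" and vanish: "\<And>u. cis u \<notin> I \<Longrightarrow> h (cis u) = 0"
    and \<rho>: "0 \<le> \<rho>" "\<rho> < 1" and e: "e > 0"
  obtains N where "\<And>z. norm z \<le> \<rho> \<Longrightarrow>
    norm (herglotz I h z - complex_of_real (1/(2*pi)) * taylor_poly (hcis h) N z) \<le> e"
proof -
  obtain M where "\<And>u. \<bar>h (cis u)\<bar> \<le> M" using dini_bounded[OF dini] by blast
  then have "norm (hcis h u) \<le> M" for u unfolding hcis_def by simp
  then obtain N where N: "\<And>z. norm z \<le> \<rho> \<Longrightarrow>
      norm (herglotz_transform (hcis h) z - taylor_poly (hcis h) N z) \<le> 2*pi*e"
    using herglotz_transform_taylor_uniform[OF hcis_continuous[OF dini] _ \<rho>, of M "2*pi*e"] e by auto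
  have "norm (herglotz I h z - complex_of_real (1/(2*pi)) * taylor_poly (hcis h) N z) \<le> e"
    if "norm z \<le> \<rho>" for z
  proof -
    have "herglotz I h z - complex_of_real (1/(2*pi)) * taylor_poly (hcis h) N z
        = complex_of_real (1/(2*pi)) * (herglotz_transform (hcis h) z - taylor_poly (hcis h) N z)"
      using herglotz_eq_transform[of I h z] vanish by (simp add: algebra_simps)
    then have "norm (herglotz I h z - complex_of_real (1/(2*pi)) * taylor_poly (hcis h) N z)
        = norm (herglotz_transform (hcis h) z - taylor_poly (hcis h) N z) / (2*pi)"
      by (simp only: norm_scale_inverse_2pi)
    then show ?thesis using N[OF that] by (simp add: pos_divide_le_eq mult.commute)
  qed
  then show thesis by (rule that)
qed

lemma herglotz_continuous:
  assumes dini: "dini_continuous h" and vanish: "\<And>u. cis u \<notin> I \<Longrightarrow> h (cis u) = 0"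
  shows "continuous_on (ball 0 1) (herglotz I h)"
proof -
  have on_cball: "continuous_on (cball 0 \<rho>) (herglotz I h)" if \<rho>: "0 \<le> \<rho>" "\<rho> < 1" for \<rho>
  proof (rule continuous_on_uniform_approx)
    fix e :: real assume "e > 0"
    then obtain N where N: "\<And>z. norm z \<le> \<rho> \<Longrightarrow>
        norm (herglotz I h z - complex_of_real (1/(2*pi)) * taylor_poly (hcis h) N z) \<le> e"
      using herglotz_taylor_approx[OF dini vanish \<rho>] by blast
    show "\<exists>g. continuous_on (cball 0 \<rho>) g \<and> (\<forall>z\<in>cball 0 \<rho>. dist (herglotz I h z) (g z) \<le> e)"
      using N unfolding taylor_poly_def
      by (intro exI[of _ "\<lambda>z. complex_of_real (1/(2*pi)) * taylor_poly (hcis h) N z"] conjI)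
        (auto simp: taylor_poly_def dist_norm intro!: continuous_intros)
  qed
  show ?thesis
    unfolding continuous_on_eq_continuous_at[OF open_ball]
  proof
    fix z :: complex assume "z \<in> ball 0 1"
    then have "z \<in> interior (cball 0 ((1 + norm z) / 2))" "0 \<le> (1 + norm z) / 2" "(1 + norm z) / 2 < 1"
      by auto
    then show "isCont (herglotz I h) z" using on_cball by (metis continuous_on_interior)
  qed
qed

section \<open>Boundary values of the Herglotz integral\<close>

text \<open>The integral converges absolutely because \<open>|K_1(x)| \<le> 10/|x|\<close> and \<open>h\<close> is Dini-continuous.\<close>

definition herglotz_bdry :: "(complex \<Rightarrow> real) \<Rightarrow> complex \<Rightarrow> complex" where
  "herglotz_bdry h w = complex_of_real (h w) + complex_of_real (1/(2*pi)) *
     (LINT x:{-pi..pi}|lebesgue. radial_kernel 1 x * complex_of_real (h (w * cis (-x)) - h w))"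

text \<open>Since \<open>K_1\<close> is purely imaginary, the real part of the boundary function is \<open>h\<close> itself.\<close>

lemma Re_herglotz_bdry: "Re (herglotz_bdry h w) = h w"
proof -
  define F where "F x = radial_kernel 1 x * complex_of_real (h (w * cis (-x)) - h w)" for x
  have "Re (LINT x:{-pi..pi}|lebesgue. F x) = 0"
  proof (cases "integrable lebesgue (\<lambda>x. indicator {-pi..pi} x *\<^sub>R F x)")
    case True
    have "Re (LINT x:{-pi..pi}|lebesgue. F x) = (LINT x|lebesgue. Re (indicator {-pi..pi} x *\<^sub>R F x))"
      unfolding set_lebesgue_integral_def by (rule integral_Re[OF True, symmetric])
    also have "\<dots> = 0" unfolding F_def by (simp add: Re_radial_kernel_1)
    finally show ?thesis .
  qed (simp add: set_lebesgue_integral_def not_integrable_integral_eq)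
  then show ?thesis unfolding herglotz_bdry_def F_def[symmetric] by simp
qed

lemma set_integrable_modulus_dominated:
  fixes g :: "real \<Rightarrow> 'b::{banach, second_countable_topology}"
  assumes dini: "dini_continuous h" and meas: "g \<in> borel_measurable borel"
    and bound: "\<And>x. x \<in> {-pi..pi} \<Longrightarrow> x \<noteq> 0 \<Longrightarrow> norm (g x) \<le> c * (dini_modulus h x / \<bar>x\<bar>)"
  shows "set_integrable lebesgue {-pi..pi} g"
proof (rule set_integrable_sym_dominated[OF meas])
  show "integrable lborel (\<lambda>x. indicator {-pi..pi} x * (c * (dini_modulus h x / \<bar>x\<bar>)))"
    using integrable_mult_right[OF dini_modulus_over_abs_integrable[OF dini], of c]
    by (simp add: mult.left_commute)
  show "AE x in lborel. x \<in> {-pi..pi} \<longrightarrow> norm (g x) \<le> c * (dini_modulus h x / \<bar>x\<bar>)"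
    using AE_lborel_singleton[of 0] by eventually_elim (use bound in auto)
qed

text \<open>The weighted distance between the kernels \<open>K_r\<close> and \<open>K_1\<close>; it controls the distance between
  \<open>b(r e^{i\<theta>})\<close> and the boundary function, uniformly in \<open>\<theta>\<close>.\<close>

definition radial_error :: "(complex \<Rightarrow> real) \<Rightarrow> real \<Rightarrow> real" where
  "radial_error h r =
     (LINT x:{-pi..pi}|lebesgue. cmod (radial_kernel r x - radial_kernel 1 x) * dini_modulus h x)"

lemma radial_kernel_diff_bound:
  assumes "1/2 \<le> r" "r \<le> 1" "\<bar>x\<bar> \<le> pi" "x \<noteq> 0"
  shows "cmod (radial_kernel r x - radial_kernel 1 x) \<le> 20 / \<bar>x\<bar>"
  using norm_triangle_ineq4[of "radial_kernel r x" "radial_kernel 1 x"]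
    radial_kernel_bound[of r x] radial_kernel_bound[of 1 x] assms by simp

lemma tendsto_at_left_one:
  fixes f :: "real \<Rightarrow> 'a::topological_space"
  assumes "((\<lambda>t. f (1 - inverse t)) \<longlongrightarrow> l) at_top"
  shows "(f \<longlongrightarrow> l) (at_left 1)"
proof -
  have "((\<lambda>r. 1 - r) \<longlongrightarrow> 0) (at_left (1::real))"
    using tendsto_diff[OF tendsto_const[of 1] tendsto_ident_at[of 1 "{..<1}"]] by simp
  moreover have "eventually (\<lambda>r. 0 < 1 - r) (at_left (1::real))"
    unfolding eventually_at_left_field by (intro exI[of _ 0]) auto
  ultimately have "LIM r at_left (1::real). inverse (1 - r) :> at_top"
    by (rule filterlim_inverse_at_top[of "\<lambda>r. 1 - r"])
  from filterlim_compose[OF assms this]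
  have "((\<lambda>r. f (1 - inverse (inverse (1 - r)))) \<longlongrightarrow> l) (at_left 1)" .
  then show ?thesis by simp
qed

text \<open>By dominated convergence (majorant \<open>20 \<omega>(x)/|x|\<close>), the radial error tends to zero.\<close>

lemma radial_error_tendsto:
  assumes dini: "dini_continuous h"
  shows "(radial_error h \<longlongrightarrow> 0) (at_left 1)"
proof -
  note [measurable] = dini_modulus_measurable[OF dini]
  define s where "s t x = indicator {-pi..pi} x *
    (cmod (radial_kernel (1 - inverse t) x - radial_kernel 1 x) * dini_modulus h x)" for t x
  define w where "w x = 20 * (indicator {-pi..pi} x * (dini_modulus h x / \<bar>x\<bar>))" for x :: real
  have lim: "AE x in lborel. ((\<lambda>t. s t x) \<longlongrightarrow> 0) at_top"
    using AE_lborel_singleton[of 0]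
  proof eventually_elim
    fix x :: real assume x: "x \<noteq> 0"
    show "((\<lambda>t. s t x) \<longlongrightarrow> 0) at_top"
    proof (cases "x \<in> {-pi..pi}")
      case True
      have "((\<lambda>t. cmod (radial_kernel (1 - inverse t) x - radial_kernel 1 x) * dini_modulus h x)
          \<longlongrightarrow> cmod (radial_kernel 1 x - radial_kernel 1 x) * dini_modulus h x) at_top"
        using True x by (intro tendsto_intros radial_kernel_tendsto) auto
      then show ?thesis unfolding s_def using True by simp
    qed (simp add: s_def)
  qed
  have bound: "\<forall>\<^sub>F t in at_top. AE x in lborel. norm (s t x) \<le> w x"
  proof (rule eventually_at_top_linorderI[of 2])
    fix t :: real assume "2 \<le> t"
    then have r: "1/2 \<le> 1 - inverse t" "1 - inverse t \<le> 1" by (auto simp: field_simps)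
    show "AE x in lborel. norm (s t x) \<le> w x"
      using AE_lborel_singleton[of 0]
    proof eventually_elim
      fix x :: real assume x: "x \<noteq> 0"
      have "x \<in> {-pi..pi} \<Longrightarrow> cmod (radial_kernel (1 - inverse t) x - radial_kernel 1 x) * dini_modulus h x
          \<le> 20 / \<bar>x\<bar> * dini_modulus h x"
        using x r by (intro mult_right_mono radial_kernel_diff_bound dini_modulus_nonneg) auto
      then show "norm (s t x) \<le> w x"
        unfolding s_def w_def using dini_modulus_nonneg[of h x] by (auto split: split_indicator)
    qed
  qed
  have "((\<lambda>t. integral\<^sup>L lborel (s t)) \<longlongrightarrow> integral\<^sup>L lborel (\<lambda>x. 0::real)) at_top"
  proof -
    have "s t \<in> borel_measurable lborel" for t unfolding s_def by measurable
    moreover have "integrable lborel w"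
      unfolding w_def by (intro integrable_mult_right dini_modulus_over_abs_integrable[OF dini])
    ultimately show ?thesis
      using integral_dominated_convergence_at_top[where f="\<lambda>x. 0::real" and s=s and w=w and M=lborel]
        lim bound by simp
  qed
  moreover have "radial_error h (1 - inverse t) = integral\<^sup>L lborel (s t)" for t
    unfolding radial_error_def set_lebesgue_integral_def s_def by (subst integral_completion) auto
  ultimately show ?thesis by (intro tendsto_at_left_one) simp
qed

lemma boundary_integrand_integrable:
  assumes dini: "dini_continuous h"
  shows "set_integrable lebesgue {-pi..pi}
    (\<lambda>x. radial_kernel 1 x * complex_of_real (h (cis (\<theta> - x)) - h (cis \<theta>)))"
proof (rule set_integrable_modulus_dominated[OF dini, of _ 10])
  have [measurable]: "(\<lambda>x. h (cis (\<theta> - x))) \<in> borel_measurable borel"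
    using measurable_compose[OF _ borel_measurable_continuous_onI[OF dini_continuous_cis[OF dini]],
        of "\<lambda>x. \<theta> - x" borel] by simp
  show "(\<lambda>x. radial_kernel 1 x * complex_of_real (h (cis (\<theta> - x)) - h (cis \<theta>))) \<in> borel_measurable borel"
    by measurable
  fix x :: real assume x: "x \<in> {-pi..pi}" "x \<noteq> 0"
  have "norm (radial_kernel 1 x * complex_of_real (h (cis (\<theta> - x)) - h (cis \<theta>)))
      = cmod (radial_kernel 1 x) * \<bar>h (cis (\<theta> - x)) - h (cis \<theta>)\<bar>"
    by (simp add: norm_mult del: of_real_diff)
  also have "\<dots> \<le> 10 / \<bar>x\<bar> * dini_modulus h x"
    using x dini_modulus_bound[OF dini, of "\<theta> - x" \<theta>]
    by (intro mult_mono radial_kernel_bound) (auto simp: dini_modulus_even)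
  finally show "norm (radial_kernel 1 x * complex_of_real (h (cis (\<theta> - x)) - h (cis \<theta>)))
      \<le> 10 * (dini_modulus h x / \<bar>x\<bar>)" by simp
qed

lemma radial_error_integrable:
  assumes dini: "dini_continuous h" and r: "1/2 \<le> r" "r \<le> 1"
  shows "set_integrable lebesgue {-pi..pi}
    (\<lambda>x. cmod (radial_kernel r x - radial_kernel 1 x) * dini_modulus h x)"
proof (rule set_integrable_modulus_dominated[OF dini, of _ 20])
  show "(\<lambda>x. cmod (radial_kernel r x - radial_kernel 1 x) * dini_modulus h x) \<in> borel_measurable borel"
    using dini_modulus_measurable[OF dini] by simp
  fix x :: real assume x: "x \<in> {-pi..pi}" "x \<noteq> 0"
  have "cmod (radial_kernel r x - radial_kernel 1 x) * dini_modulus h x \<le> 20 / \<bar>x\<bar> * dini_modulus h x"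
    using x r by (intro mult_right_mono radial_kernel_diff_bound dini_modulus_nonneg) auto
  then show "norm (cmod (radial_kernel r x - radial_kernel 1 x) * dini_modulus h x)
      \<le> 20 * (dini_modulus h x / \<bar>x\<bar>)"
    using dini_modulus_nonneg[of h x] by simp
qed

text \<open>Since \<open>(1/2pi) \<integral> K_r = 1\<close>, the difference between \<open>b(r e^{i\<theta>})\<close> and the boundary value at
  \<open>e^{i\<theta>}\<close> is a single integral against \<open>K_r - K_1\<close>.\<close>

lemma herglotz_minus_bdry:
  assumes dini: "dini_continuous h" and vanish: "\<And>u. cis u \<notin> I \<Longrightarrow> h (cis u) = 0"
    and \<theta>: "-pi \<le> \<theta>" "\<theta> \<le> pi" and r: "1/2 \<le> r" "r < 1"
  shows "herglotz I h (complex_of_real r * cis \<theta>) - herglotz_bdry h (cis \<theta>)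
    = complex_of_real (1/(2*pi)) * (LINT x:{-pi..pi}|lebesgue.
        (radial_kernel r x - radial_kernel 1 x) * complex_of_real (h (cis (\<theta> - x)) - h (cis \<theta>)))"
proof -
  have r0: "0 \<le> r" using r by simp
  define c where "c = complex_of_real (h (cis \<theta>))"
  define a where "a x = radial_kernel r x * hcis h (\<theta> - x)" for x
  define d where "d x = radial_kernel 1 x * complex_of_real (h (cis (\<theta> - x)) - h (cis \<theta>))" for x
  have int_a: "set_integrable lebesgue {-pi..pi} a"
    unfolding a_def
    by (rule continuous_set_integral_sym(1))
      (intro continuous_intros radial_kernel_continuous[OF r0 r(2)]
        continuous_on_compose2[OF hcis_continuous[OF dini]], auto)
  have int_K: "set_integrable lebesgue {-pi..pi} (\<lambda>x. c * radial_kernel r x)"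
    by (intro set_integrable_mult_right continuous_set_integral_sym(1) radial_kernel_continuous[OF r0 r(2)])
  have int_d: "set_integrable lebesgue {-pi..pi} d"
    unfolding d_def by (rule boundary_integrand_integrable[OF dini])
  have "herglotz I h (complex_of_real r * cis \<theta>)
      = complex_of_real (1/(2*pi)) * herglotz_transform (hcis h) (complex_of_real r * cis \<theta>)"
    by (rule herglotz_eq_transform) (rule vanish)
  also have "herglotz_transform (hcis h) (complex_of_real r * cis \<theta>) = (LINT x:{-pi..pi}|lebesgue. a x)"
    unfolding a_def by (rule herglotz_transform_radial[OF hcis_continuous[OF dini] hcis_periodic r0 r(2) \<theta>])
  finally have herglotz: "herglotz I h (complex_of_real r * cis \<theta>)
      = complex_of_real (1/(2*pi)) * (LINT x:{-pi..pi}|lebesgue. a x)" .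
  have "herglotz_transform (\<lambda>_. 1) (complex_of_real r * cis \<theta>)
      = (LINT x:{-pi..pi}|lebesgue. radial_kernel r x * 1)"
    by (rule herglotz_transform_radial[OF _ _ r0 r(2) \<theta>]) auto
  moreover have "herglotz_transform (\<lambda>_. 1) (complex_of_real r * cis \<theta>) = 2*pi"
    by (rule herglotz_transform_one) (use r in \<open>simp add: norm_mult\<close>)
  ultimately have kernel_mean: "(LINT x:{-pi..pi}|lebesgue. radial_kernel r x) = 2*pi" by simp
  have bdry: "herglotz_bdry h (cis \<theta>) = c + complex_of_real (1/(2*pi)) * (LINT x:{-pi..pi}|lebesgue. d x)"
    unfolding herglotz_bdry_def c_def d_def by (simp add: cis_mult)
  have "(LINT x:{-pi..pi}|lebesgue. (radial_kernel r x - radial_kernel 1 x) * complex_of_real (h (cis (\<theta> - x)) - h (cis \<theta>)))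
      = (LINT x:{-pi..pi}|lebesgue. a x - c * radial_kernel r x - d x)"
    unfolding a_def c_def d_def hcis_def by (simp add: algebra_simps)
  also have "\<dots> = (LINT x:{-pi..pi}|lebesgue. a x - c * radial_kernel r x) - (LINT x:{-pi..pi}|lebesgue. d x)"
    by (intro set_integral_diff(2) set_integral_diff(1) int_a int_K int_d)
  also have "(LINT x:{-pi..pi}|lebesgue. a x - c * radial_kernel r x)
      = (LINT x:{-pi..pi}|lebesgue. a x) - c * (LINT x:{-pi..pi}|lebesgue. radial_kernel r x)"
    using set_integral_diff(2)[OF int_a int_K] by simp
  finally show ?thesis unfolding herglotz bdry kernel_mean by (simp add: field_simps)
qed

lemma herglotz_radial_bound:
  assumes dini: "dini_continuous h" and vanish: "\<And>u. cis u \<notin> I \<Longrightarrow> h (cis u) = 0"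
    and \<theta>: "-pi \<le> \<theta>" "\<theta> \<le> pi" and r: "1/2 \<le> r" "r < 1"
  shows "norm (herglotz I h (complex_of_real r * cis \<theta>) - herglotz_bdry h (cis \<theta>)) \<le> radial_error h r / (2*pi)"
proof -
  define D where "D x = (radial_kernel r x - radial_kernel 1 x) * complex_of_real (h (cis (\<theta> - x)) - h (cis \<theta>))" for x
  define E where "E x = cmod (radial_kernel r x - radial_kernel 1 x) * dini_modulus h x" for x
  have D_bound: "norm (D x) \<le> E x" for x
    unfolding D_def E_def norm_mult using dini_modulus_bound[OF dini, of "\<theta> - x" \<theta>]
    by (intro mult_left_mono) (auto simp: dini_modulus_even simp del: of_real_diff)
  have int_E: "set_integrable lebesgue {-pi..pi} E"
    unfolding E_def using r by (intro radial_error_integrable[OF dini]) auto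
  have "D \<in> borel_measurable borel"
  proof -
    have [measurable]: "(\<lambda>x. h (cis (\<theta> - x))) \<in> borel_measurable borel"
      using measurable_compose[OF _ borel_measurable_continuous_onI[OF dini_continuous_cis[OF dini]],
          of "\<lambda>x. \<theta> - x" borel] by simp
    show ?thesis unfolding D_def by measurable
  qed
  then have "set_borel_measurable lebesgue {-pi..pi} D"
    unfolding set_borel_measurable_def by (intro borel_measurable_lebesgue_real) measurable
  moreover have "AE x in lebesgue. x \<in> {-pi..pi} \<longrightarrow> norm (D x) \<le> norm (E x)"
    using D_bound order_trans[OF D_bound abs_ge_self] by (intro AE_I2) (simp add: E_def)
  ultimately have int_D: "set_integrable lebesgue {-pi..pi} D"
    by (rule set_integrable_bound[OF int_E])
  have "norm (LINT x:{-pi..pi}|lebesgue. D x) \<le> (LINT x:{-pi..pi}|lebesgue. E x)"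
    using D_bound
    by (intro order_trans[OF set_integral_norm_bound[OF int_D] set_integral_mono]
        set_integrable_norm int_D int_E)
  moreover have "herglotz I h (complex_of_real r * cis \<theta>) - herglotz_bdry h (cis \<theta>)
      = complex_of_real (1/(2*pi)) * (LINT x:{-pi..pi}|lebesgue. D x)"
    unfolding D_def by (rule herglotz_minus_bdry[OF dini _ \<theta> r]) (rule vanish)
  ultimately show ?thesis
    unfolding radial_error_def E_def[symmetric]
    by (simp only: norm_scale_inverse_2pi) (simp add: divide_right_mono)
qed

lemma herglotz_radial_uniform_limit:
  assumes dini: "dini_continuous h" and vanish: "\<And>u. cis u \<notin> I \<Longrightarrow> h (cis u) = 0"
  shows "uniform_limit (sphere 0 1) (\<lambda>r w. herglotz I h (complex_of_real r * w)) (herglotz_bdry h) (at_left 1)"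
  unfolding uniform_limit_iff
proof (intro allI impI)
  fix e :: real assume "e > 0"
  then have "eventually (\<lambda>r. radial_error h r < e * (2*pi)) (at_left 1)"
    by (intro order_tendstoD(2)[OF radial_error_tendsto[OF dini]]) auto
  moreover have "eventually (\<lambda>r. r \<in> {1/2<..<1}) (at_left (1::real))"
    by (rule eventually_at_left_real) simp
  ultimately show "\<forall>\<^sub>F r in at_left 1. \<forall>w\<in>sphere 0 1.
      dist (herglotz I h (complex_of_real r * w)) (herglotz_bdry h w) < e"
  proof eventually_elim
    case (elim r)
    show ?case
    proof
      fix w :: complex assume "w \<in> sphere 0 1"
      then have w: "w = cis (Arg w)" "-pi \<le> Arg w" "Arg w \<le> pi" using sphere_cis_Arg by auto
      have "norm (herglotz I h (complex_of_real r * cis (Arg w)) - herglotz_bdry h (cis (Arg w)))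
          \<le> radial_error h r / (2*pi)"
        by (rule herglotz_radial_bound[OF dini vanish w(2,3)]) (use elim in auto)
      also have "\<dots> < e" using elim by (simp add: divide_simps)
      finally show "dist (herglotz I h (complex_of_real r * w)) (herglotz_bdry h w) < e"
        using w(1) by (simp add: dist_norm)
    qed
  qed
qed

lemma herglotz_radial_close:
  assumes dini: "dini_continuous h" and vanish: "\<And>u. cis u \<notin> I \<Longrightarrow> h (cis u) = 0" and e: "e > 0"
  obtains r0 where "0 \<le> r0" "r0 < 1"
    "\<And>r w. r0 < r \<Longrightarrow> r < 1 \<Longrightarrow> norm w = 1 \<Longrightarrow>
      dist (herglotz I h (complex_of_real r * w)) (herglotz_bdry h w) < e"
proof -
  have "eventually (\<lambda>r. \<forall>w\<in>sphere 0 1. dist (herglotz I h (complex_of_real r * w)) (herglotz_bdry h w) < e)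
      (at_left 1)"
    using e by (intro uniform_limitD[OF herglotz_radial_uniform_limit[OF dini vanish]])
  then obtain b where "b < 1" and b: "\<And>r. b < r \<Longrightarrow> r < 1 \<Longrightarrow>
      \<forall>w\<in>sphere 0 1. dist (herglotz I h (complex_of_real r * w)) (herglotz_bdry h w) < e"
    unfolding eventually_at_left_field by blast
  show thesis by (rule that[of "max b 0"]) (use \<open>b < 1\<close> b in auto)
qed

text \<open>In particular, the radial limits form a continuous function on the circle.  The boundary
  function does not depend on \<open>I\<close>, so we may take \<open>I\<close> to be the whole circle.\<close>

lemma herglotz_bdry_continuous:
  assumes dini: "dini_continuous h"
  shows "continuous_on (sphere 0 1) (herglotz_bdry h)"
proof -
  have vanish: "cis u \<notin> circT \<Longrightarrow> h (cis u) = 0" for u unfolding circT_def by simp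
  have "eventually (\<lambda>r. r \<in> {0<..<1}) (at_left (1::real))"
    by (rule eventually_at_left_real) simp
  then have "\<forall>\<^sub>F r in at_left 1. continuous_on (sphere 0 1) (\<lambda>w. herglotz circT h (complex_of_real r * w))"
  proof eventually_elim
    case (elim r)
    then show ?case
      by (intro continuous_on_compose2[OF herglotz_continuous[of h circT, OF dini vanish]] continuous_intros)
        (auto simp: norm_mult)
  qed
  then show ?thesis
    by (rule uniform_limit_theorem[OF _ herglotz_radial_uniform_limit[of h circT, OF dini vanish]])
      auto
qed

definition herglotz_ext :: "complex set \<Rightarrow> (complex \<Rightarrow> real) \<Rightarrow> complex \<Rightarrow> complex" where
  "herglotz_ext I h z = (if norm z < 1 then herglotz I h z else herglotz_bdry h z)"

text \<open>Radial projection of a point \<open>y \<noteq> 0\<close> of the closed disc onto the circle: it moves \<open>y\<close> by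
  \<open>1 - |y| \<le> dist y x\<close> for any \<open>x\<close> on the circle, hence at most doubles the distance to \<open>x\<close>.\<close>

lemma radial_projection:
  fixes x y :: complex
  assumes y: "y \<noteq> 0" "norm y \<le> 1" and x: "norm x = 1"
  defines "v \<equiv> y / complex_of_real (norm y)"
  shows "norm v = 1" "y = complex_of_real (norm y) * v" "dist v x \<le> 2 * dist y x"
proof -
  show v: "norm v = 1" "y = complex_of_real (norm y) * v"
    unfolding v_def using y by (auto simp: norm_divide)
  have "v - y = complex_of_real (1 - norm y) * v" using v(2) by (simp add: algebra_simps)
  moreover have "norm (complex_of_real (1 - norm y)) = 1 - norm y"
    using y(2) by (simp only: norm_of_real)
  ultimately have "dist v y = 1 - norm y" using v(1) by (simp only: dist_norm norm_mult) simp
  moreover have "1 - norm y \<le> dist y x"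
    using norm_triangle_ineq2[of x y] x by (simp add: dist_norm norm_minus_commute)
  ultimately show "dist v x \<le> 2 * dist y x" using dist_triangle[of v x y] by linarith
qed

text \<open>Continuity at a boundary point \<open>x\<close>: a point \<open>y\<close> of the open disc near \<open>x\<close> is \<open>|y| v\<close> with \<open>|y|\<close>
  close to \<open>1\<close> and \<open>v\<close> on the circle close to \<open>x\<close>, so \<open>b(y) \<approx> b_1(v) \<approx> b_1(x)\<close>.\<close>

lemma herglotz_ext_continuous_boundary:
  assumes dini: "dini_continuous h" and vanish: "\<And>u. cis u \<notin> I \<Longrightarrow> h (cis u) = 0"
    and x: "norm x = 1" and e: "e > 0"
  obtains d where "d > 0"
    "\<And>y. y \<in> cball 0 1 \<Longrightarrow> dist y x < d \<Longrightarrow> dist (herglotz_ext I h y) (herglotz_ext I h x) < e"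
proof -
  obtain r0 where r0: "0 \<le> r0" "r0 < 1"
    and near: "\<And>r w. r0 < r \<Longrightarrow> r < 1 \<Longrightarrow> norm w = 1 \<Longrightarrow>
      dist (herglotz I h (complex_of_real r * w)) (herglotz_bdry h w) < e/2"
    using herglotz_radial_close[OF dini vanish, where e="e/2"] e by auto
  have "\<exists>d>0. \<forall>v\<in>sphere 0 1. dist v x < d \<longrightarrow> dist (herglotz_bdry h v) (herglotz_bdry h x) < e/2"
    using herglotz_bdry_continuous[OF dini] x e unfolding continuous_on_iff by (metis half_gt_zero mem_sphere_0)
  then obtain d1 where d1: "d1 > 0"
    "\<And>v. norm v = 1 \<Longrightarrow> dist v x < d1 \<Longrightarrow> dist (herglotz_bdry h v) (herglotz_bdry h x) < e/2"
    by auto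
  define d where "d = min (d1/2) (1 - r0)"
  have "dist (herglotz_ext I h y) (herglotz_ext I h x) < e" if y: "y \<in> cball 0 1" "dist y x < d" for y
  proof (cases "norm y < 1")
    case False
    then have "norm y = 1" "dist y x < d1" using y d1(1) unfolding d_def by auto
    then show ?thesis unfolding herglotz_ext_def using False x d1(2)[of y] e by simp
  next
    case True
    have "1 - dist y x \<le> norm y"
      using norm_triangle_ineq2[of x y] x by (simp add: dist_norm norm_minus_commute)
    then have "r0 < norm y" using y unfolding d_def by linarith
    then obtain v where v: "norm v = 1" "y = complex_of_real (norm y) * v" "dist v x \<le> 2 * dist y x"
      using radial_projection[of y x] True x r0 by fastforce
    then have "dist (herglotz_bdry h v) (herglotz_bdry h x) < e/2"
      using d1(2) y(2) unfolding d_def by simp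
    moreover have "dist (herglotz I h y) (herglotz_bdry h v) < e/2"
      using near[of "norm y" v] \<open>r0 < norm y\<close> True v by simp
    ultimately show ?thesis
      unfolding herglotz_ext_def
      using True x dist_triangle[of "herglotz I h y" "herglotz_bdry h x" "herglotz_bdry h v"] by simp
  qed
  moreover have "d > 0" unfolding d_def using d1 r0 by simp
  ultimately show thesis using that by blast
qed

lemma herglotz_ext_continuous:
  assumes dini: "dini_continuous h" and vanish: "\<And>u. cis u \<notin> I \<Longrightarrow> h (cis u) = 0"
  shows "continuous_on (cball 0 1) (herglotz_ext I h)"
  unfolding continuous_on_iff
proof (intro ballI allI impI)
  fix x :: complex and e :: real assume x: "x \<in> cball 0 1" and e: "e > 0"
  show "\<exists>d>0. \<forall>y\<in>cball 0 1. dist y x < d \<longrightarrow> dist (herglotz_ext I h y) (herglotz_ext I h x) < e"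
  proof (cases "norm x < 1")
    case True
    have "isCont (herglotz I h) x"
      using herglotz_continuous[of h I, OF dini vanish] True
        continuous_on_eq_continuous_at[OF open_ball, of 0 1 "herglotz I h"]
      by simp
    then obtain d where d: "d > 0" "\<And>y. dist y x < d \<Longrightarrow> dist (herglotz I h y) (herglotz I h x) < e"
      using e unfolding continuous_at_eps_delta by blast
    have "dist (herglotz_ext I h y) (herglotz_ext I h x) < e" if "dist y x < min d (1 - norm x)" for y
    proof -
      have "norm y \<le> norm x + dist y x" using norm_triangle_ineq[of x "y - x"] by (simp add: dist_norm)
      then show ?thesis unfolding herglotz_ext_def using True d(2) that by simp
    qed
    then show ?thesis using d(1) True by (intro exI[of _ "min d (1 - norm x)"]) auto
  next
    case False
    then have "norm x = 1" using x by simp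
    then obtain d where "d > 0"
      "\<And>y. y \<in> cball 0 1 \<Longrightarrow> dist y x < d \<Longrightarrow> dist (herglotz_ext I h y) (herglotz_ext I h x) < e"
      using herglotz_ext_continuous_boundary[OF dini vanish _ e] by blast
    then show ?thesis by blast
  qed
qed

section \<open>Multipliers of boundary functions of analytic type\<close>

text \<open>Multipliers form an
  algebra that is closed under uniform limits; it contains the characters \<open>e^{ikt}\<close>, \<open>k \<ge> 0\<close>.\<close>

definition analytic_type :: "(real \<Rightarrow> complex) \<Rightarrow> bool" where
  "analytic_type g \<longleftrightarrow> (\<forall>n::nat. n \<ge> 1 \<longrightarrow> (LINT t:{0..<2*pi}|lebesgue. g t * cis (real n * t)) = 0)"

definition multiplier :: "(real \<Rightarrow> complex) \<Rightarrow> bool" where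
  "multiplier \<phi> \<longleftrightarrow> continuous_on UNIV \<phi> \<and>
     (\<forall>g. set_integrable lebesgue {0..<2*pi} g \<longrightarrow> analytic_type g \<longrightarrow> analytic_type (\<lambda>t. g t * \<phi> t))"

lemma multiplier_continuous: "multiplier \<phi> \<Longrightarrow> continuous_on UNIV \<phi>"
  unfolding multiplier_def by simp

lemma multiplier_cis: "multiplier (\<lambda>t. cis (real k * t))"
  unfolding multiplier_def
proof (intro conjI allI impI)
  show "continuous_on UNIV (\<lambda>t. cis (real k * t))" by (intro continuous_intros)
  fix g assume g: "analytic_type g"
  show "analytic_type (\<lambda>t. g t * cis (real k * t))"
    unfolding analytic_type_def
  proof (intro allI impI)
    fix n :: nat assume "n \<ge> 1"
    then have "k + n \<ge> 1" by simp
    then have "(LINT t:{0..<2*pi}|lebesgue. g t * cis (real (k + n) * t)) = 0"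
      using g unfolding analytic_type_def by blast
    moreover have "g t * cis (real k * t) * cis (real n * t) = g t * cis (real (k + n) * t)" for t
      by (simp add: cis_mult distrib_right mult.assoc)
    ultimately show "(LINT t:{0..<2*pi}|lebesgue. g t * cis (real k * t) * cis (real n * t)) = 0"
      by (simp only:)
  qed
qed

lemma multiplier_add:
  assumes "multiplier \<phi>" "multiplier \<psi>"
  shows "multiplier (\<lambda>t. \<phi> t + \<psi> t)"
  unfolding multiplier_def
proof (intro conjI allI impI)
  show "continuous_on UNIV (\<lambda>t. \<phi> t + \<psi> t)"
    using assms by (auto intro: continuous_intros simp: multiplier_def)
  fix g assume g: "set_integrable lebesgue {0..<2*pi} g" "analytic_type g"
  have "analytic_type (\<lambda>t. g t * \<phi> t)" "analytic_type (\<lambda>t. g t * \<psi> t)"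
    using assms g unfolding multiplier_def by auto
  moreover have "set_integrable lebesgue {0..<2*pi} (\<lambda>t. g t * \<phi> t * cis (real n * t))"
    "set_integrable lebesgue {0..<2*pi} (\<lambda>t. g t * \<psi> t * cis (real n * t))" for n
    using assms unfolding multiplier_def
    by (auto intro!: set_integrable_mult_continuous g(1) continuous_intros)
  ultimately show "analytic_type (\<lambda>t. g t * (\<phi> t + \<psi> t))"
    unfolding analytic_type_def by (simp add: distrib_left distrib_right set_integral_add(2))
qed

lemma multiplier_cmult:
  assumes "multiplier \<phi>"
  shows "multiplier (\<lambda>t. c * \<phi> t)"
  unfolding multiplier_def
proof (intro conjI allI impI)
  show "continuous_on UNIV (\<lambda>t. c * \<phi> t)"
    using assms by (auto intro: continuous_intros simp: multiplier_def)
  fix g assume "set_integrable lebesgue {0..<2*pi} g" "analytic_type g"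
  then have "analytic_type (\<lambda>t. g t * \<phi> t)" using assms unfolding multiplier_def by auto
  show "analytic_type (\<lambda>t. g t * (c * \<phi> t))"
    unfolding analytic_type_def
  proof (intro allI impI)
    fix n :: nat assume "n \<ge> 1"
    have "(LINT t:{0..<2*pi}|lebesgue. g t * (c * \<phi> t) * cis (real n * t))
        = c * (LINT t:{0..<2*pi}|lebesgue. g t * \<phi> t * cis (real n * t))"
      by (simp add: algebra_simps)
    then show "(LINT t:{0..<2*pi}|lebesgue. g t * (c * \<phi> t) * cis (real n * t)) = 0"
      using \<open>analytic_type (\<lambda>t. g t * \<phi> t)\<close> \<open>n \<ge> 1\<close> unfolding analytic_type_def by simp
  qed
qed

lemma multiplier_mult:
  assumes "multiplier \<phi>" "multiplier \<psi>"
  shows "multiplier (\<lambda>t. \<phi> t * \<psi> t)"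
  unfolding multiplier_def
proof (intro conjI allI impI)
  show "continuous_on UNIV (\<lambda>t. \<phi> t * \<psi> t)"
    using assms by (auto intro: continuous_intros simp: multiplier_def)
  fix g assume g: "set_integrable lebesgue {0..<2*pi} g" "analytic_type g"
  have "analytic_type (\<lambda>t. g t * \<phi> t)" "set_integrable lebesgue {0..<2*pi} (\<lambda>t. g t * \<phi> t)"
    using assms(1) g by (auto simp: multiplier_def intro!: set_integrable_mult_continuous)
  then have "analytic_type (\<lambda>t. (g t * \<phi> t) * \<psi> t)" using assms(2) unfolding multiplier_def by blast
  then show "analytic_type (\<lambda>t. g t * (\<phi> t * \<psi> t))" by (simp add: mult.assoc)
qed

lemma multiplier_const: "multiplier (\<lambda>t. c)"
  using multiplier_cmult[OF multiplier_cis[of 0], of c] by simp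

lemma multiplier_sum:
  "finite S \<Longrightarrow> (\<And>i. i \<in> S \<Longrightarrow> multiplier (f i)) \<Longrightarrow> multiplier (\<lambda>t. \<Sum>i\<in>S. f i t)"
proof (induction S rule: finite_induct)
  case empty
  then show ?case using multiplier_const[of 0] by simp
next
  case (insert x F)
  then show ?case using multiplier_add[of "f x" "\<lambda>t. \<Sum>i\<in>F. f i t"] by simp
qed

lemma multiplier_power: "multiplier \<phi> \<Longrightarrow> multiplier (\<lambda>t. \<phi> t ^ m)"
proof (induction m)
  case 0
  then show ?case using multiplier_const[of 1] by simp
next
  case (Suc m)
  then show ?case using multiplier_mult[of \<phi> "\<lambda>t. \<phi> t ^ m"] by simp
qed

text \<open>Uniform approximation changes the Fourier coefficients of \<open>g \<phi>\<close> by at most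
  \<open>e \<parallel>g\<parallel>_1\<close>; hence multipliers are closed under uniform limits.\<close>

lemma fourier_coeff_perturbation:
  assumes g: "set_integrable lebesgue {0..<2*pi} g"
    and \<phi>: "continuous_on UNIV \<phi>" and \<psi>: "continuous_on UNIV \<psi>"
    and close: "\<And>t. t \<in> {0..<2*pi} \<Longrightarrow> norm (\<phi> t - \<psi> t) \<le> e"
  shows "norm ((LINT t:{0..<2*pi}|lebesgue. g t * \<phi> t * cis (real n * t))
      - (LINT t:{0..<2*pi}|lebesgue. g t * \<psi> t * cis (real n * t)))
    \<le> e * (LINT t:{0..<2*pi}|lebesgue. norm (g t))"
proof -
  have int: "set_integrable lebesgue {0..<2*pi} (\<lambda>t. g t * \<eta> t * cis (real n * t))"
    if "continuous_on UNIV \<eta>" for \<eta>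
    by (intro set_integrable_mult_continuous[where g="\<lambda>t. g t * \<eta> t"] set_integrable_mult_continuous g
        that continuous_intros)
  have "(LINT t:{0..<2*pi}|lebesgue. g t * \<phi> t * cis (real n * t))
      - (LINT t:{0..<2*pi}|lebesgue. g t * \<psi> t * cis (real n * t))
      = (LINT t:{0..<2*pi}|lebesgue. g t * (\<phi> t - \<psi> t) * cis (real n * t))"
    by (subst set_integral_diff(2)[OF int[OF \<phi>] int[OF \<psi>], symmetric]) (simp add: algebra_simps)
  also have "norm \<dots> \<le> (LINT t:{0..<2*pi}|lebesgue. e * norm (g t))"
  proof (rule order_trans[OF set_integral_norm_bound set_integral_mono])
    show "set_integrable lebesgue {0..<2*pi} (\<lambda>t. g t * (\<phi> t - \<psi> t) * cis (real n * t))"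
      using int[of "\<lambda>t. \<phi> t - \<psi> t"] \<phi> \<psi> by (auto intro: continuous_intros)
    then show "set_integrable lebesgue {0..<2*pi} (\<lambda>t. norm (g t * (\<phi> t - \<psi> t) * cis (real n * t)))"
      by (rule set_integrable_norm)
    show "set_integrable lebesgue {0..<2*pi} (\<lambda>t. e * norm (g t))"
      by (intro set_integrable_mult_right set_integrable_norm g)
    fix t assume "t \<in> {0..<2*pi}"
    then show "norm (g t * (\<phi> t - \<psi> t) * cis (real n * t)) \<le> e * norm (g t)"
      using mult_left_mono[OF close norm_ge_zero[of "g t"]] by (simp add: norm_mult mult.commute)
  qed
  finally show ?thesis by simp
qed

lemma multiplier_uniform_limit:
  assumes \<phi>: "continuous_on UNIV \<phi>"
    and approx: "\<And>e. e > 0 \<Longrightarrow> \<exists>\<psi>. multiplier \<psi> \<and> (\<forall>t\<in>{0..<2*pi}. norm (\<phi> t - \<psi> t) \<le> e)"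
  shows "multiplier \<phi>"
  unfolding multiplier_def
proof (intro conjI allI impI \<phi>)
  fix g assume g: "set_integrable lebesgue {0..<2*pi} g" "analytic_type g"
  show "analytic_type (\<lambda>t. g t * \<phi> t)"
    unfolding analytic_type_def
  proof (intro allI impI)
    fix n :: nat assume n: "n \<ge> 1"
    define X where "X = (LINT t:{0..<2*pi}|lebesgue. g t * \<phi> t * cis (real n * t))"
    define G where "G = (LINT t:{0..<2*pi}|lebesgue. norm (g t))"
    have G: "0 \<le> G"
      unfolding G_def set_lebesgue_integral_def
      by (intro Bochner_Integration.integral_nonneg) (auto simp: indicator_def)
    have "norm X \<le> 0 + e" if e: "e > 0" for e
    proof -
      obtain \<psi> where \<psi>: "multiplier \<psi>" "\<And>t. t \<in> {0..<2*pi} \<Longrightarrow> norm (\<phi> t - \<psi> t) \<le> e / (G + 1)"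
        using approx[of "e / (G + 1)"] e G by auto
      have "(LINT t:{0..<2*pi}|lebesgue. g t * \<psi> t * cis (real n * t)) = 0"
        using \<psi>(1) g n unfolding multiplier_def analytic_type_def by blast
      then have "norm X \<le> e / (G + 1) * G"
        using fourier_coeff_perturbation[OF g(1) \<phi> multiplier_continuous[OF \<psi>(1)] \<psi>(2), of n]
        unfolding X_def G_def by simp
      also have "\<dots> \<le> e" using e G by (simp add: divide_simps)
      finally show ?thesis by simp
    qed
    then have "norm X \<le> 0" by (rule field_le_epsilon)
    then show "(LINT t:{0..<2*pi}|lebesgue. g t * \<phi> t * cis (real n * t)) = 0"
      unfolding X_def by simp
  qed
qed

text \<open>The cases \<open>N = 0\<close>
  and \<open>N = 1\<close> give \<open>|1/(1-q)| \<le> 2\<close> and \<open>|1/(1-q) - 1| \<le> 1\<close>.\<close>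

lemma geometric_remainder_bound:
  fixes q :: complex
  assumes q: "norm q \<le> 1/2"
  shows "norm (1 / (1 - q) - (\<Sum>m<N. q^m)) \<le> 2 * (1/2)^N"
proof -
  have half: "1/2 \<le> norm (1 - q)" using norm_triangle_ineq2[of 1 q] q by simp
  then have q1: "q \<noteq> 1" by auto
  have "1 / (1 - q) - (\<Sum>m<N. q^m) = q^N / (1 - q)"
    using q1 by (simp add: sum_gp_strict field_simps)
  moreover have "norm (q^N) / norm (1 - q) \<le> (1/2)^N / (1/2)"
    using q half by (intro frac_le) (auto simp: norm_power power_mono)
  ultimately show ?thesis by (simp add: norm_divide)
qed

lemma multiplier_geometric:
  assumes q: "multiplier q" and small: "\<And>t. norm (q t) \<le> 1/2"
  shows "multiplier (\<lambda>t. 1 / (1 - q t))"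
proof (rule multiplier_uniform_limit)
  have "1 - q t \<noteq> 0" for t using small[of t] by (auto simp: right_minus_eq)
  then show "continuous_on UNIV (\<lambda>t. 1 / (1 - q t))"
    using multiplier_continuous[OF q] by (intro continuous_intros) auto
  fix e :: real assume "e > 0"
  have "(\<lambda>N. 2 * (1/2::real)^N) \<longlonglongrightarrow> 2 * 0"
    by (intro tendsto_intros LIMSEQ_power_zero) auto
  then have "eventually (\<lambda>N. 2 * (1/2::real)^N < e) sequentially"
    using \<open>e > 0\<close> by (intro order_tendstoD(2)) auto
  then obtain N where N: "2 * (1/2::real)^N < e" by (auto simp: eventually_sequentially)
  have "norm (1 / (1 - q t) - (\<Sum>m<N. q t ^ m)) \<le> e" for t
    using geometric_remainder_bound[OF small[of t], of N] N by linarith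
  then show "\<exists>\<psi>. multiplier \<psi> \<and> (\<forall>t\<in>{0..<2*pi}. norm (1 / (1 - q t) - \<psi> t) \<le> e)"
    by (intro exI[of _ "\<lambda>t. \<Sum>m<N. q t ^ m"] conjI multiplier_sum multiplier_power q) auto
qed

lemma multiplier_herglotz_radial:
  assumes dini: "dini_continuous h" and vanish: "\<And>u. cis u \<notin> I \<Longrightarrow> h (cis u) = 0"
    and r: "0 \<le> r" "r < 1"
  shows "multiplier (\<lambda>t. herglotz I h (complex_of_real r * cis t))"
proof (rule multiplier_uniform_limit)
  show "continuous_on UNIV (\<lambda>t. herglotz I h (complex_of_real r * cis t))"
    using r by (intro continuous_on_compose2[OF herglotz_continuous[OF dini vanish]] continuous_intros)
      (auto simp: norm_mult)
  fix e :: real assume "e > 0"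
  then obtain N where N: "\<And>z. norm z \<le> r \<Longrightarrow>
      norm (herglotz I h z - complex_of_real (1/(2*pi)) * taylor_poly (hcis h) N z) \<le> e"
    using herglotz_taylor_approx[OF dini vanish r] by blast
  have "multiplier (\<lambda>t. (complex_of_real r * cis t) ^ n)" for n
  proof -
    have "(\<lambda>t. (complex_of_real r * cis t) ^ n) = (\<lambda>t. (complex_of_real r)^n * cis (real n * t))"
      by (simp add: power_mult_distrib Complex.DeMoivre)
    then show ?thesis using multiplier_cmult[OF multiplier_cis[of n]] by simp
  qed
  then have "multiplier (\<lambda>t. complex_of_real (1/(2*pi)) * taylor_poly (hcis h) N (complex_of_real r * cis t))"
    unfolding taylor_poly_def
    by (intro multiplier_cmult multiplier_add multiplier_const multiplier_sum) auto
  moreover have "norm (complex_of_real r * cis t) \<le> r" for t using r by (simp add: norm_mult)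
  ultimately show "\<exists>\<psi>. multiplier \<psi> \<and>
      (\<forall>t\<in>{0..<2*pi}. norm (herglotz I h (complex_of_real r * cis t) - \<psi> t) \<le> e)"
    using N by blast
qed

text \<open>The boundary function, as a uniform limit of the radial functions above, is a multiplier.\<close>

lemma multiplier_herglotz_bdry:
  assumes dini: "dini_continuous h"
  shows "multiplier (\<lambda>t. herglotz_bdry h (cis t))"
proof (rule multiplier_uniform_limit)
  show "continuous_on UNIV (\<lambda>t. herglotz_bdry h (cis t))"
    by (rule continuous_on_compose2[OF herglotz_bdry_continuous[OF dini]]) (auto intro!: continuous_intros)
  have vanish: "cis u \<notin> circT \<Longrightarrow> h (cis u) = 0" for u unfolding circT_def by simp
  fix e :: real assume "e > 0"
  then obtain r0 where r0: "0 \<le> r0" "r0 < 1"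
    and near: "\<And>r w. r0 < r \<Longrightarrow> r < 1 \<Longrightarrow> norm w = 1 \<Longrightarrow>
      dist (herglotz circT h (complex_of_real r * w)) (herglotz_bdry h w) < e"
    using herglotz_radial_close[of h circT, OF dini vanish] by blast
  define r where "r = (r0 + 1) / 2"
  have r: "0 \<le> r" "r0 < r" "r < 1" unfolding r_def using r0 by auto
  have close: "\<forall>w\<in>sphere 0 1. dist (herglotz circT h (complex_of_real r * w)) (herglotz_bdry h w) < e"
    using near r by auto
  show "\<exists>\<psi>. multiplier \<psi> \<and> (\<forall>t\<in>{0..<2*pi}. norm (herglotz_bdry h (cis t) - \<psi> t) \<le> e)"
    using r close
    by (intro exI[of _ "\<lambda>t. herglotz circT h (complex_of_real r * cis t)"] conjI
        multiplier_herglotz_radial[OF dini vanish])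
      (auto simp: dist_norm norm_minus_commute less_imp_le)
qed

section \<open>The first variation of the extremal problem\<close>

text \<open>For \<open>|s b| \<le> 1/2\<close>, \<open>g (1/(1 - s b) - 1) = s g b + s\<^sup>2 g b\<^sup>2/(1 - s b)\<close>, with the obvious
  bounds on the remainder and on the whole perturbation.\<close>

lemma perturbation_remainder:
  fixes g b :: complex and s K :: real
  assumes b: "cmod b \<le> K" and s: "\<bar>s\<bar> * K \<le> 1/2"
  defines "T \<equiv> g * (1 / (1 - complex_of_real s * b) - 1)"
  obtains R where "T = complex_of_real s * (g * b) + (complex_of_real s)\<^sup>2 * R"
    "cmod R \<le> 2 * K\<^sup>2 * cmod g" "cmod T \<le> 2 * \<bar>s\<bar> * K * cmod g"
proof -
  have K: "0 \<le> K" using b norm_ge_zero order_trans by blast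
  define q where "q = 1 - complex_of_real s * b"
  have "cmod (complex_of_real s * b) \<le> \<bar>s\<bar> * K" by (simp add: norm_mult mult_left_mono b)
  then have q_half: "1/2 \<le> cmod q"
    unfolding q_def using norm_triangle_ineq2[of 1 "complex_of_real s * b"] s by simp
  then have q0: "q \<noteq> 0" by auto
  have T_eq: "T = g * (complex_of_real s * b) / q"
    unfolding T_def q_def using q0 unfolding q_def by (simp add: field_simps)
  have "g * (complex_of_real s * b) = (complex_of_real s * (g * b)) * q + (complex_of_real s)^2 * (g * b^2)"
    unfolding q_def by (simp add: algebra_simps power2_eq_square)
  then have "T = complex_of_real s * (g * b) + (complex_of_real s)\<^sup>2 * (g * b^2 / q)"
    unfolding T_eq using q0 by (simp add: add_divide_distrib)
  moreover have "cmod (g * b^2 / q) \<le> 2 * K\<^sup>2 * cmod g"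
  proof -
    have "cmod (g * b^2 / q) = cmod g * (cmod b)\<^sup>2 / cmod q" by (simp add: norm_mult norm_divide norm_power)
    also have "\<dots> \<le> cmod g * K\<^sup>2 / (1/2)"
      using q_half b by (intro frac_le mult_left_mono power_mono) auto
    finally show ?thesis by (simp add: algebra_simps)
  qed
  moreover have "cmod T \<le> 2 * \<bar>s\<bar> * K * cmod g"
  proof -
    have "cmod T = cmod g * (\<bar>s\<bar> * cmod b) / cmod q" unfolding T_eq by (simp add: norm_mult norm_divide)
    also have "\<dots> \<le> cmod g * (\<bar>s\<bar> * K) / (1/2)"
      using q_half b K by (intro frac_le mult_left_mono mult_nonneg_nonneg) auto
    finally show ?thesis by (simp add: algebra_simps)
  qed
  ultimately show thesis by (rule that)
qed

lemma perturbation_expansion: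
  fixes e g b :: complex and s K :: real
  assumes b: "cmod b \<le> K" and s: "\<bar>s\<bar> * K \<le> 1/2"
  shows "(cmod (e - g * (1 / (1 - complex_of_real s * b) - 1)))\<^sup>2
      \<le> (cmod e)\<^sup>2 - 2 * s * Re (e * cnj (g * b)) + s\<^sup>2 * (4 * K\<^sup>2 * (cmod e * cmod g + (cmod g)\<^sup>2))"
proof -
  define T where "T = g * (1 / (1 - complex_of_real s * b) - 1)"
  obtain R where T_expand: "T = complex_of_real s * (g * b) + (complex_of_real s)\<^sup>2 * R"
    and R_bound: "cmod R \<le> 2 * K\<^sup>2 * cmod g" and T_bound: "cmod T \<le> 2 * \<bar>s\<bar> * K * cmod g"
    using perturbation_remainder[OF b s, of g] unfolding T_def by blast
  have "(cmod (e - T))\<^sup>2 = (cmod e)\<^sup>2 - 2 * Re (e * cnj T) + (cmod T)\<^sup>2"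
    by (simp add: cmod_power2 power2_diff)
  also have "Re (e * cnj T) = s * Re (e * cnj (g * b)) + s\<^sup>2 * Re (e * cnj R)"
    unfolding T_expand by (simp add: algebra_simps power2_eq_square)
  finally have eq: "(cmod (e - T))\<^sup>2
      = (cmod e)\<^sup>2 - 2 * s * Re (e * cnj (g * b)) + (- 2 * s\<^sup>2 * Re (e * cnj R) + (cmod T)\<^sup>2)"
    by (simp add: algebra_simps)
  have "- Re (e * cnj R) \<le> cmod e * (2 * K\<^sup>2 * cmod g)"
    using abs_Re_le_cmod[of "e * cnj R"] mult_left_mono[OF R_bound norm_ge_zero[of e]]
    by (simp add: norm_mult)
  then have "2 * s\<^sup>2 * (- Re (e * cnj R)) \<le> 2 * s\<^sup>2 * (cmod e * (2 * K\<^sup>2 * cmod g))"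
    by (intro mult_left_mono) auto
  moreover have "(cmod T)\<^sup>2 \<le> s\<^sup>2 * (4 * K\<^sup>2 * (cmod g)\<^sup>2)"
    using power_mono[OF T_bound norm_ge_zero[of T], of 2] by (simp add: power_mult_distrib power2_abs)
  ultimately show ?thesis using eq unfolding T_def by (simp add: algebra_simps)
qed

lemma first_variation_zero:
  fixes a P \<delta> :: real
  assumes \<delta>: "\<delta> > 0" and P: "0 \<le> P" and ineq: "\<And>s. \<bar>s\<bar> \<le> \<delta> \<Longrightarrow> 2 * s * a \<le> s\<^sup>2 * P"
  shows "a = 0"
proof -
  have "\<bar>a\<bar> \<le> 0 + e" if e: "e > 0" for e
  proof -
    define s where "s = min \<delta> (e / (P + 1))"
    have s: "0 < s" "s \<le> \<delta>" "s * P \<le> e"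
    proof -
      show "0 < s" "s \<le> \<delta>" unfolding s_def using \<delta> e P by auto
      have "s * P \<le> e / (P + 1) * P" unfolding s_def using P by (intro mult_right_mono) auto
      also have "\<dots> \<le> e" using e P by (simp add: divide_simps)
      finally show "s * P \<le> e" .
    qed
    have "2 * s * a \<le> s\<^sup>2 * P" "2 * (-s) * a \<le> (-s)\<^sup>2 * P"
      using ineq[of s] ineq[of "-s"] s by auto
    then have "s * (2 * a) \<le> s * (s * P)" "s * (- 2 * a) \<le> s * (s * P)"
      by (simp_all add: power2_eq_square algebra_simps)
    then have "2 * a \<le> s * P" "- 2 * a \<le> s * P" using s(1) by (simp_all only: mult_le_cancel_left_pos)
    then have "2 * \<bar>a\<bar> \<le> s * P" by linarith
    then show ?thesis using s(3) e by linarith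
  qed
  then have "\<bar>a\<bar> \<le> 0" by (rule field_le_epsilon)
  then show ?thesis by simp
qed

lemma set_integrable_norm_mult:
  fixes F G :: "real \<Rightarrow> complex"
  assumes "set_borel_measurable lebesgue A F" "set_borel_measurable lebesgue A G"
    and "set_integrable lebesgue A (\<lambda>t. (cmod (F t))\<^sup>2)" "set_integrable lebesgue A (\<lambda>t. (cmod (G t))\<^sup>2)"
  shows "set_integrable lebesgue A (\<lambda>t. cmod (F t) * cmod (G t))"
proof (rule set_integrable_bound[OF set_integral_add(1)[OF assms(3,4)]])
  show "set_borel_measurable lebesgue A (\<lambda>t. cmod (F t) * cmod (G t))"
    by (intro set_borel_measurable_mult set_borel_measurable_norm_sq(1) assms(1,2))
  have "cmod (F t) * cmod (G t) \<le> (cmod (F t))\<^sup>2 + (cmod (G t))\<^sup>2" for t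
    using sum_squares_bound[of "cmod (F t)" "cmod (G t)"]
      mult_nonneg_nonneg[OF norm_ge_zero[of "F t"] norm_ge_zero[of "G t"]] by linarith
  then show "AE t in lebesgue. t \<in> A \<longrightarrow>
      norm (cmod (F t) * cmod (G t)) \<le> norm ((cmod (F t))\<^sup>2 + (cmod (G t))\<^sup>2)"
    by simp
qed

lemma set_integrable_norm_diff_sq:
  fixes F G :: "real \<Rightarrow> complex"
  assumes "set_borel_measurable lebesgue A F" "set_borel_measurable lebesgue A G"
    and "set_integrable lebesgue A (\<lambda>t. (cmod (F t))\<^sup>2)" "set_integrable lebesgue A (\<lambda>t. (cmod (G t))\<^sup>2)"
  shows "set_integrable lebesgue A (\<lambda>t. (cmod (F t - G t))\<^sup>2)"
proof (rule set_integrable_bound[OF set_integrable_mult_right[OF set_integral_add(1)[OF assms(3,4)], of 2]])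
  show "set_borel_measurable lebesgue A (\<lambda>t. (cmod (F t - G t))\<^sup>2)"
    by (intro set_borel_measurable_norm_sq(2) set_borel_measurable_diff assms(1,2))
  have "(cmod (F t - G t))\<^sup>2 \<le> 2 * ((cmod (F t))\<^sup>2 + (cmod (G t))\<^sup>2)" for t
  proof -
    have "(cmod (F t - G t))\<^sup>2 \<le> (cmod (F t) + cmod (G t))\<^sup>2"
      by (intro power_mono norm_triangle_ineq4) auto
    then show ?thesis
      using sum_squares_bound[of "cmod (F t)" "cmod (G t)"] by (simp add: power2_sum)
  qed
  then show "AE t in lebesgue. t \<in> A \<longrightarrow>
      norm ((cmod (F t - G t))\<^sup>2) \<le> norm (2 * ((cmod (F t))\<^sup>2 + (cmod (G t))\<^sup>2))"
    by simp
qed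

lemma set_integral_Re:
  fixes F :: "real \<Rightarrow> complex"
  assumes "set_integrable lebesgue A F"
  shows "set_integrable lebesgue A (\<lambda>t. Re (F t))"
    and "Re (LINT t:A|lebesgue. F t) = (LINT t:A|lebesgue. Re (F t))"
  using assms unfolding set_integrable_def set_lebesgue_integral_def
  by (auto dest: integrable_Re simp del: integral_Re simp add: integral_Re[symmetric])

lemma set_integrable_mult_cnj_bounded:
  fixes e G b :: "real \<Rightarrow> complex"
  assumes A: "A \<in> sets lebesgue"
    and e: "set_borel_measurable lebesgue A e" "set_integrable lebesgue A (\<lambda>t. (cmod (e t))\<^sup>2)"
    and G: "set_borel_measurable lebesgue A G" "set_integrable lebesgue A (\<lambda>t. (cmod (G t))\<^sup>2)"
    and b: "continuous_on UNIV b" "\<And>t. cmod (b t) \<le> K"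
  shows "set_integrable lebesgue A (\<lambda>t. e t * cnj (G t * b t))"
proof (rule set_integrable_bound[OF set_integrable_mult_right[OF set_integrable_norm_mult[OF e(1) G(1) e(2) G(2)], of K]])
  show "set_borel_measurable lebesgue A (\<lambda>t. e t * cnj (G t * b t))"
    by (intro set_borel_measurable_mult e(1) set_borel_measurable_Re_cnj(2) G(1)
        set_borel_measurable_continuous[OF b(1) A])
  have "norm (e t * cnj (G t * b t)) \<le> K * (cmod (e t) * cmod (G t))" for t
    using mult_left_mono[OF b(2)[of t], of "cmod (e t) * cmod (G t)"] by (simp add: norm_mult mult_ac)
  then show "AE t in lebesgue. t \<in> A \<longrightarrow>
      norm (e t * cnj (G t * b t)) \<le> norm (K * (cmod (e t) * cmod (G t)))"
    by (auto intro: order_trans[OF _ abs_ge_self])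
qed

lemma set_integrable_perturbed_error:
  fixes e G q :: "real \<Rightarrow> complex"
  assumes A: "A \<in> sets lebesgue"
    and e: "set_borel_measurable lebesgue A e" "set_integrable lebesgue A (\<lambda>t. (cmod (e t))\<^sup>2)"
    and G: "set_borel_measurable lebesgue A G" "set_integrable lebesgue A (\<lambda>t. (cmod (G t))\<^sup>2)"
    and q: "continuous_on UNIV q" "\<And>t. cmod (q t) \<le> 1/2"
  shows "set_integrable lebesgue A (\<lambda>t. (cmod (e t - G t * (1 / (1 - q t) - 1)))\<^sup>2)"
proof -
  have "1 - q t \<noteq> 0" for t using q(2)[of t] by (auto simp: right_minus_eq)
  then have "continuous_on UNIV (\<lambda>t. 1 / (1 - q t) - 1)" by (intro continuous_intros q(1)) auto
  then have meas: "set_borel_measurable lebesgue A (\<lambda>t. G t * (1 / (1 - q t) - 1))"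
    by (intro set_borel_measurable_mult G(1) set_borel_measurable_continuous A)
  have "(cmod (G t * (1 / (1 - q t) - 1)))\<^sup>2 \<le> (cmod (G t))\<^sup>2" for t
    using geometric_remainder_bound[OF q(2)[of t], of 1] by (simp add: norm_mult power_mono mult_left_le)
  then have "set_integrable lebesgue A (\<lambda>t. (cmod (G t * (1 / (1 - q t) - 1)))\<^sup>2)"
    by (intro set_integrable_bound[OF G(2)] set_borel_measurable_norm_sq(2) meas) auto
  then show ?thesis by (rule set_integrable_norm_diff_sq[OF e(1) meas e(2)])
qed

lemma variational_identity:
  fixes e G b :: "real \<Rightarrow> complex" and A :: "real set" and K :: real
  assumes A: "A \<in> sets lebesgue"
    and e: "set_borel_measurable lebesgue A e" "set_integrable lebesgue A (\<lambda>t. (cmod (e t))\<^sup>2)"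
    and G: "set_borel_measurable lebesgue A G" "set_integrable lebesgue A (\<lambda>t. (cmod (G t))\<^sup>2)"
    and b: "continuous_on UNIV b" "\<And>t. cmod (b t) \<le> K" and K: "K > 0"
    and minimal: "\<And>s. \<bar>s\<bar> * K \<le> 1/2 \<Longrightarrow>
        (LINT t:A|lebesgue. (cmod (e t))\<^sup>2)
          \<le> (LINT t:A|lebesgue. (cmod (e t - G t * (1 / (1 - complex_of_real s * b t) - 1)))\<^sup>2)"
  shows "(LINT t:A|lebesgue. Re (e t * cnj (G t * b t))) = 0"
proof -
  define R where "R t = Re (e t * cnj (G t * b t))" for t
  have int_R: "set_integrable lebesgue A R"
    unfolding R_def by (rule set_integral_Re(1)[OF set_integrable_mult_cnj_bounded[OF A e G b]])
  define P where "P t = 4 * K\<^sup>2 * (cmod (e t) * cmod (G t) + (cmod (G t))\<^sup>2)" for t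
  have int_P: "set_integrable lebesgue A P"
    unfolding P_def by (intro set_integrable_mult_right set_integral_add(1) set_integrable_norm_mult e G)
  define a where "a = (LINT t:A|lebesgue. R t)"
  define P0 where "P0 = (LINT t:A|lebesgue. P t)"
  have P0: "0 \<le> P0" unfolding P0_def set_lebesgue_integral_def
    by (intro Bochner_Integration.integral_nonneg) (auto simp: P_def indicator_def)
  have "2 * s * a \<le> s\<^sup>2 * P0" if s: "\<bar>s\<bar> \<le> 1/(2*K)" for s
  proof -
    have sK: "\<bar>s\<bar> * K \<le> 1/2" using s K by (simp add: field_simps)
    have "cmod (complex_of_real s * b t) \<le> 1/2" for t
      using sK mult_left_mono[OF b(2)[of t] abs_ge_zero[of s]] by (simp add: norm_mult)
    then have int_T: "set_integrable lebesgue A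
        (\<lambda>t. (cmod (e t - G t * (1 / (1 - complex_of_real s * b t) - 1)))\<^sup>2)"
      by (intro set_integrable_perturbed_error[OF A e G] continuous_intros b(1))
    have "(LINT t:A|lebesgue. (cmod (e t))\<^sup>2)
        \<le> (LINT t:A|lebesgue. (cmod (e t - G t * (1 / (1 - complex_of_real s * b t) - 1)))\<^sup>2)"
      by (rule minimal[OF sK])
    also have "\<dots> \<le> (LINT t:A|lebesgue. (cmod (e t))\<^sup>2 - 2 * s * R t + s\<^sup>2 * P t)"
      unfolding R_def P_def
      by (intro set_integral_mono perturbation_expansion[OF b(2) sK] int_T
          set_integral_add(1) set_integral_diff(1) e(2) set_integrable_mult_right
          int_R[unfolded R_def] int_P[unfolded P_def])
    also have "\<dots> = (LINT t:A|lebesgue. (cmod (e t))\<^sup>2) - 2 * s * a + s\<^sup>2 * P0"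
      unfolding a_def P0_def
      by (simp add: set_integral_add(2) set_integral_diff(2) set_integral_diff(1) e(2) int_R int_P)
    finally show ?thesis by simp
  qed
  then have "a = 0" by (intro first_variation_zero[OF _ P0, of "1/(2*K)"]) (use K in auto)
  then show ?thesis unfolding a_def R_def .
qed

lemma angles_circT: "angles circT = {0..<2*pi}"
  unfolding angles_def circT_def by auto

lemma H2_boundary_function:
  assumes "H2 g"
  shows "set_borel_measurable lebesgue {0..<2*pi} (\<lambda>t. g (cis t))"
    and "set_integrable lebesgue {0..<2*pi} (\<lambda>t. (cmod (g (cis t)))\<^sup>2)"
    and "analytic_type (\<lambda>t. g (cis t))"
  using assms unfolding H2_def L2_on_def angles_circT set_borel_measurable_def analytic_type_def by auto

text \<open>On the period, which has finite measure, square-integrable functions are integrable.\<close>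

lemma square_integrable_imp_integrable_period:
  fixes F :: "real \<Rightarrow> complex"
  assumes "set_borel_measurable lebesgue {0..<2*pi} F"
    and "set_integrable lebesgue {0..<2*pi} (\<lambda>t. (cmod (F t))\<^sup>2)"
  shows "set_integrable lebesgue {0..<2*pi} F"
proof (rule set_integrable_bound[OF set_integral_add(1)[OF set_integrable_const_period[of 1] assms(2)] assms(1)])
  have "cmod (F t) \<le> 1 + (cmod (F t))\<^sup>2" for t
  proof (cases "cmod (F t) \<le> 1")
    case False
    then have "cmod (F t) * 1 \<le> cmod (F t) * cmod (F t)" by (intro mult_left_mono) auto
    then show ?thesis by (simp add: power2_eq_square)
  qed (simp add: add_increasing2)
  then show "AE t in lebesgue. t \<in> {0..<2*pi} \<longrightarrow> norm (F t) \<le> norm (1 + (cmod (F t))\<^sup>2)"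
    by simp
qed

lemma H2_mult_multiplier:
  assumes g: "H2 g" and \<phi>: "multiplier \<phi>" and bound: "\<And>t. cmod (\<phi> t) \<le> C"
    and \<psi>: "\<And>t. \<psi> (cis t) = \<phi> t"
  shows "H2 (\<lambda>z. g z * \<psi> z)"
proof -
  note g_facts = H2_boundary_function[OF g]
  have meas: "set_borel_measurable lebesgue {0..<2*pi} (\<lambda>t. g (cis t) * \<phi> t)"
    by (intro set_borel_measurable_mult g_facts(1)
        set_borel_measurable_continuous[OF multiplier_continuous[OF \<phi>]]) simp
  have "(cmod (g (cis t) * \<phi> t))\<^sup>2 \<le> C\<^sup>2 * (cmod (g (cis t)))\<^sup>2" for t
  proof -
    have "cmod (g (cis t) * \<phi> t) \<le> cmod (g (cis t)) * C"
      unfolding norm_mult by (intro mult_left_mono bound) auto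
    then have "(cmod (g (cis t) * \<phi> t))\<^sup>2 \<le> (cmod (g (cis t)) * C)\<^sup>2" by (intro power_mono) auto
    then show ?thesis by (simp add: power_mult_distrib mult.commute)
  qed
  then have square_int: "set_integrable lebesgue {0..<2*pi} (\<lambda>t. (cmod (g (cis t) * \<phi> t))\<^sup>2)"
    by (intro set_integrable_bound[OF set_integrable_mult_right[OF g_facts(2), of "C\<^sup>2"]]
        set_borel_measurable_norm_sq(2) meas) (auto intro: order_trans[OF _ abs_ge_self])
  have "analytic_type (\<lambda>t. g (cis t) * \<phi> t)"
    using \<phi> g_facts(3) square_integrable_imp_integrable_period[OF g_facts(1,2)]
    unfolding multiplier_def by blast
  then show ?thesis
    using meas square_int
    unfolding H2_def L2_on_def angles_circT set_borel_measurable_def analytic_type_def \<psi> by simp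
qed

text \<open>The perturbation \<open>g_0/(1 - s b)\<close> of an admissible function is again admissible for small real
  \<open>s\<close>: it lies in \<open>H\<^sup>2\<close> because \<open>1/(1 - s b_1)\<close> is a bounded multiplier, and its modulus does not
  exceed that of \<open>g_0\<close> off \<open>I\<close>, where \<open>b_1 = h + i (...)\<close> is purely imaginary.\<close>

lemma perturbation_admissible:
  assumes dini: "dini_continuous h" and vanish: "\<And>u. cis u \<notin> I \<Longrightarrow> h (cis u) = 0"
    and g0: "BEP_admissible (circT - I) g0"
    and K: "\<And>t. cmod (herglotz_bdry h (cis t)) \<le> K" and s: "\<bar>s\<bar> * K \<le> 1/2"
  shows "BEP_admissible (circT - I) (\<lambda>z. g0 z * (1 / (1 - complex_of_real s * herglotz_ext I h z)))"
proof -
  define q where "q t = complex_of_real s * herglotz_bdry h (cis t)" for t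
  have on_circle: "1 / (1 - complex_of_real s * herglotz_ext I h (cis t)) = 1 / (1 - q t)" for t
    unfolding herglotz_ext_def q_def by simp
  have q_half: "cmod (q t) \<le> 1/2" for t
    using s mult_left_mono[OF K[of t] abs_ge_zero[of s]] unfolding q_def by (simp add: norm_mult)
  have multiplier: "multiplier (\<lambda>t. 1 / (1 - q t))"
    unfolding q_def by (intro multiplier_geometric multiplier_cmult multiplier_herglotz_bdry dini)
      (use q_half in \<open>simp add: q_def\<close>)
  have "H2 (\<lambda>z. g0 z * (1 / (1 - complex_of_real s * herglotz_ext I h z)))"
  proof (rule H2_mult_multiplier[OF _ multiplier])
    show "H2 g0" using g0 unfolding BEP_admissible_def by simp
    show "cmod (1 / (1 - q t)) \<le> 2" for t using geometric_remainder_bound[OF q_half[of t], of 0] by simp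
  qed (rule on_circle)
  moreover have off_I: "cmod (1 / (1 - q t)) \<le> 1" if "t \<in> angles (circT - I)" for t
  proof -
    have "Re (q t) = 0"
      using that vanish[of t] Re_herglotz_bdry[of h "cis t"] unfolding q_def angles_def by simp
    then have "1 \<le> cmod (1 - q t)" using abs_Re_le_cmod[of "1 - q t"] by simp
    then show ?thesis by (simp add: norm_divide divide_le_eq_1)
  qed
  then have "AE t in lebesgue. t \<in> angles (circT - I) \<longrightarrow>
      cmod (g0 (cis t) * (1 / (1 - complex_of_real s * herglotz_ext I h (cis t)))) \<le> 1"
    using g0 unfolding BEP_admissible_def on_circle
  proof (elim conjE eventually_mono, intro impI)
    fix t assume t: "t \<in> angles (circT - I)" and "t \<in> angles (circT - I) \<longrightarrow> cmod (g0 (cis t)) \<le> 1"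
    then show "cmod (g0 (cis t) * (1 / (1 - q t))) \<le> 1"
      using off_I[OF t] unfolding norm_mult
      by (intro mult_le_one) auto
  qed
  ultimately show ?thesis unfolding BEP_admissible_def by simp
qed

section \<open>The orthogonality relation and the main theorem\<close>

lemma norm_on_le_imp_integral_le:
  assumes "norm_on E u \<le> norm_on E v"
  shows "(LINT t:angles E|lebesgue. (cmod (u (cis t)))\<^sup>2) \<le> (LINT t:angles E|lebesgue. (cmod (v (cis t)))\<^sup>2)"
proof -
  have Re_inner: "Re (inner_on E w w) = (1/(2*pi)) * (LINT t:angles E|lebesgue. (cmod (w (cis t)))\<^sup>2)" for w
  proof -
    have "(\<lambda>t. w (cis t) * cnj (w (cis t))) = (\<lambda>t. complex_of_real ((cmod (w (cis t)))\<^sup>2))"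
      by (simp only: complex_norm_square)
    then show ?thesis unfolding inner_on_def by (simp only: set_integral_complex_of_real) simp
  qed
  have "Re (inner_on E u u) \<le> Re (inner_on E v v)" using assms unfolding norm_on_def by simp
  then show ?thesis unfolding Re_inner by (simp add: divide_simps)
qed

lemma herglotz_bdry_bounded:
  assumes "dini_continuous h"
  obtains K where "K > 0" "\<And>t. cmod (herglotz_bdry h (cis t)) \<le> K"
proof -
  have "compact (herglotz_bdry h ` sphere 0 1)"
    by (rule compact_continuous_image[OF herglotz_bdry_continuous[OF assms] compact_sphere])
  then obtain K where K: "\<And>y. y \<in> herglotz_bdry h ` sphere 0 1 \<Longrightarrow> norm y \<le> K"
    using compact_imp_bounded[of "herglotz_bdry h ` sphere 0 1"] unfolding bounded_iff by blast
  have "cmod (herglotz_bdry h (cis t)) \<le> max K 1" for t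
    using K[of "herglotz_bdry h (cis t)"] by (simp add: le_max_iff_disj)
  then show thesis by (intro that[of "max K 1"]) auto
qed

lemma BEP_data_square_integrable:
  assumes I: "meas_T I" and f: "L2_on I f" and g0: "BEP_admissible (circT - I) g0"
  shows "angles I \<in> sets lebesgue"
    and "set_borel_measurable lebesgue (angles I) (\<lambda>t. g0 (cis t))"
    and "set_integrable lebesgue (angles I) (\<lambda>t. (cmod (g0 (cis t)))\<^sup>2)"
    and "set_borel_measurable lebesgue (angles I) (\<lambda>t. f (cis t) - g0 (cis t))"
    and "set_integrable lebesgue (angles I) (\<lambda>t. (cmod (f (cis t) - g0 (cis t)))\<^sup>2)"
proof -
  show A: "angles I \<in> sets lebesgue" using I unfolding meas_T_def by simp
  have sub: "angles I \<subseteq> {0..<2*pi}" unfolding angles_def by auto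
  note g0_facts = H2_boundary_function[OF g0[unfolded BEP_admissible_def, THEN conjunct1]]
  show g0_meas: "set_borel_measurable lebesgue (angles I) (\<lambda>t. g0 (cis t))"
    and g0_int: "set_integrable lebesgue (angles I) (\<lambda>t. (cmod (g0 (cis t)))\<^sup>2)"
    using set_borel_measurable_subset[OF g0_facts(1) A sub] set_integrable_subset[OF g0_facts(2) A sub]
    by auto
  have f_meas: "set_borel_measurable lebesgue (angles I) (\<lambda>t. f (cis t))"
    and f_int: "set_integrable lebesgue (angles I) (\<lambda>t. (cmod (f (cis t)))\<^sup>2)"
    using f unfolding L2_on_def set_borel_measurable_def by auto
  show "set_borel_measurable lebesgue (angles I) (\<lambda>t. f (cis t) - g0 (cis t))"
    "set_integrable lebesgue (angles I) (\<lambda>t. (cmod (f (cis t) - g0 (cis t)))\<^sup>2)"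
    using set_borel_measurable_diff[OF f_meas g0_meas] set_integrable_norm_diff_sq[OF f_meas g0_meas f_int g0_int]
    by auto
qed

lemma BEP_solution_perturbation:
  assumes sol: "BEP_solution I f g0"
    and dini: "dini_continuous h" and vanish: "\<And>u. cis u \<notin> I \<Longrightarrow> h (cis u) = 0"
    and K: "\<And>t. cmod (herglotz_bdry h (cis t)) \<le> K" and s: "\<bar>s\<bar> * K \<le> 1/2"
  shows "(LINT t:angles I|lebesgue. (cmod (f (cis t) - g0 (cis t)))\<^sup>2)
    \<le> (LINT t:angles I|lebesgue. (cmod (f (cis t) - g0 (cis t)
          - g0 (cis t) * (1 / (1 - complex_of_real s * herglotz_bdry h (cis t)) - 1)))\<^sup>2)"
proof -
  define gs where "gs z = g0 z * (1 / (1 - complex_of_real s * herglotz_ext I h z))" for z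
  have g0: "BEP_admissible (circT - I) g0" using sol unfolding BEP_solution_def by simp
  have "BEP_admissible (circT - I) gs"
    unfolding gs_def by (rule perturbation_admissible[OF dini vanish g0 K s])
  then have "norm_on I (\<lambda>z. f z - g0 z) \<le> norm_on I (\<lambda>z. f z - gs z)"
    using sol unfolding BEP_solution_def by blast
  then have "(LINT t:angles I|lebesgue. (cmod (f (cis t) - g0 (cis t)))\<^sup>2)
      \<le> (LINT t:angles I|lebesgue. (cmod (f (cis t) - gs (cis t)))\<^sup>2)"
    by (rule norm_on_le_imp_integral_le)
  moreover have "f (cis t) - gs (cis t) = f (cis t) - g0 (cis t)
      - g0 (cis t) * (1 / (1 - complex_of_real s * herglotz_bdry h (cis t)) - 1)" for t
    unfolding gs_def herglotz_ext_def by (simp add: right_diff_distrib)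
  ultimately show ?thesis by simp
qed

lemma Re_inner_herglotz_ext_zero:
  assumes I: "meas_T I" and f: "L2_on I f" and sol: "BEP_solution I f g0"
    and dini: "dini_continuous h" and vanish: "\<And>u. cis u \<notin> I \<Longrightarrow> h (cis u) = 0"
  shows "Re (inner_on I (\<lambda>z. (f z - g0 z) * cnj (g0 z)) (herglotz_ext I h)) = 0"
proof -
  obtain K where K: "K > 0" "\<And>t. cmod (herglotz_bdry h (cis t)) \<le> K"
    using herglotz_bdry_bounded[OF dini] by blast
  have "BEP_admissible (circT - I) g0" using sol unfolding BEP_solution_def by simp
  note data = BEP_data_square_integrable[OF I f this]
  define b where "b t = herglotz_bdry h (cis t)" for t
  have b: "continuous_on UNIV b" "\<And>t. cmod (b t) \<le> K"
    unfolding b_def using K(2)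
    by (auto intro!: continuous_on_compose2[OF herglotz_bdry_continuous[OF dini]] continuous_intros)
  have identity: "(LINT t:angles I|lebesgue. Re ((f (cis t) - g0 (cis t)) * cnj (g0 (cis t) * b t))) = 0"
    using BEP_solution_perturbation[OF sol dini vanish K(2)] unfolding b_def[symmetric]
    by (intro variational_identity[OF data(1,4,5,2,3) b K(1)]) auto
  have "(\<lambda>t. (f (cis t) - g0 (cis t)) * cnj (g0 (cis t)) * cnj (herglotz_ext I h (cis t)))
      = (\<lambda>t. (f (cis t) - g0 (cis t)) * cnj (g0 (cis t) * b t))"
    unfolding b_def herglotz_ext_def by (simp add: mult.assoc)
  then have "inner_on I (\<lambda>z. (f z - g0 z) * cnj (g0 z)) (herglotz_ext I h)
      = complex_of_real (1/(2*pi)) * (LINT t:angles I|lebesgue. (f (cis t) - g0 (cis t)) * cnj (g0 (cis t) * b t))"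
    unfolding inner_on_def by (simp only:)
  then show ?thesis
    using identity set_integral_Re(2)[OF set_integrable_mult_cnj_bounded[OF data(1,4,5,2,3) b]] by simp
qed

theorem mainTheorem6:
  fixes I :: "complex set" and f g0 :: "complex \<Rightarrow> complex" and h :: "complex \<Rightarrow> real"
  assumes "meas_T I"
    and "ell I > 0" and "ell (circT - I) > 0"
    and "L2_on I f"
    and "BEP_solution I f g0"
    and "dini_continuous h"
    and "closure {z \<in> circT. h z \<noteq> 0} \<subseteq> (top_of_set circT) interior_of I"
  shows "\<exists>B. continuous_on (cball 0 1) B \<and> (\<forall>z \<in> ball 0 1. B z = herglotz I h z) \<and>
           Re (inner_on I (\<lambda>z. (f z - g0 z) * cnj (g0 z)) B) = 0"
proof -
  have vanish: "h (cis u) = 0" if "cis u \<notin> I" for u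
  proof (rule ccontr)
    assume "h (cis u) \<noteq> 0"
    then have "cis u \<in> closure {z \<in> circT. h z \<noteq> 0}"
      by (intro subsetD[OF closure_subset]) (simp add: circT_def)
    with assms(7) have "cis u \<in> I" using interior_of_subset[of "top_of_set circT" I] by blast
    with that show False by contradiction
  qed
  show ?thesis
  proof (intro exI[of _ "herglotz_ext I h"] conjI ballI)
    show "continuous_on (cball 0 1) (herglotz_ext I h)"
      by (rule herglotz_ext_continuous[OF assms(6) vanish])
    show "herglotz_ext I h z = herglotz I h z" if "z \<in> ball 0 1" for z
      using that unfolding herglotz_ext_def by simp
    show "Re (inner_on I (\<lambda>z. (f z - g0 z) * cnj (g0 z)) (herglotz_ext I h)) = 0"
      by (rule Re_inner_herglotz_ext_zero[OF assms(1,4,5,6) vanish])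
  qed
qed

end
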